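(* Consider the finite-sum setting with $n\ge2$, assume (A1) and (A2), and run ProxSARAH with full-gradient snapshots $v_0^{(s)}=\nabla f(w_0^{(s)})$, inner batch size $1\le\hat b\le\sqrt n$, epoch length $m=\lfloor n/\hat b\rfloor$, and constant step-sizes $$\gamma_t=\gamma:=\frac1{L\sqrt{\omega m}},\quad \eta_t=\eta:=\frac{2\sqrt{\omega m}}{4\sqrt{\omega m}+1},\quad \omega:=\frac{3(n-\hat b)}{2\hat b(n-1)},$$ assuming $\gamma\le1$. Let $\tilde w_T$ be drawn uniformly from $\{w_t^{(s)}:s=1,\dots,S,\ t=0,\dots,m\}$. Then $$\mathbb{E}\|G_\eta(\tilde w_T)\|^2=\frac{1}{(m+1)S}\sum_{s=1}^S\sum_{t=0}^m\mathbb{E}\|G_\eta(w_t^{(s)})\|^2\le\frac{2}{\gamma\eta^2(m+1)S}\big[F(\tilde w_0)-F^\star\big],$$ and there is an absolute constant $C>0$ (independent of $n,\hat b,L,S,F$) such that the right-hand side is at most $\frac{C L[F(\tilde w_0)-F^\star]}{S\sqrt n}$. Consequently, with $S=\lceil CL[F(\tilde w_0)-F^\star]/(\sqrt n\varepsilon^2)\rceil$ one gets $\mathbb{E}\|G_\eta(\tilde w_T)\|^2\le\varepsilon^2$ using $\mathcal{O}\big(n+\sqrt n L[F(\tilde w_0)-F^\star]\varepsilon^{-2}\big)$ evaluations of individual gradients $\nabla f_i$ and $S(m+1)$ proximal operations.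
   Context: Setting. $\psi:\mathbb{R}^d\to\mathbb{R}\cup\{+\infty\}$ is proper, closed and convex, with $\mathrm{prox}_{\eta\psi}(w):=\arg\min_z\{\eta\psi(z)+\frac12\|z-w\|^2\}$. Finite-sum setting: $f=\frac1n\sum_{i=1}^nf_i$ with $n\ge2$ and each $f_i:\mathbb{R}^d\to\mathbb{R}$ continuously differentiable. $F:=f+\psi$. Gradient mapping: $G_\eta(w):=\frac1\eta\big(w-\mathrm{prox}_{\eta\psi}(w-\eta\nabla f(w))\big)$. (A1): $F^\star:=\inf_wF(w)>-\infty$ and $\mathrm{dom}\,F\neq\emptyset$. (A2) ($L$-average smoothness): $\frac1n\sum_{i=1}^n\|\nabla f_i(w)-\nabla f_i(\hat w)\|^2\le L^2\|w-\hat w\|^2$ for all $w,\hat w$. ProxSARAH: inputs $\tilde w_0\in\mathbb{R}^d$, integers $S,m\ge1$, inner batch size $\hat b\ge1$, step-sizes $\eta_t>0$, $\gamma_t\in(0,1]$ ($t=0,\dots,m$, the same in every outer iteration). For $s=1,\dots,S$: set $w_0^{(s)}:=\tilde w_{s-1}$; form a snapshot estimator $v_0^{(s)}$; set $\hat w_1^{(s)}:=\mathrm{prox}_{\eta_0\psi}(w_0^{(s)}-\eta_0v_0^{(s)})$, $w_1^{(s)}:=(1-\gamma_0)w_0^{(s)}+\gamma_0\hat w_1^{(s)}$; for $t=1,\dots,m$: draw a uniformly random subset $\hat{\mathcal B}_t^{(s)}\subset\{1,\dots,n\}$ of size $\hat b$ independent of all previous randomness, set $v_t^{(s)}:=v_{t-1}^{(s)}+\frac1{\hat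 b}\sum_{i\in\hat{\mathcal B}_t^{(s)}}[\nabla f_i(w_t^{(s)})-\nabla f_i(w_{t-1}^{(s)})]$, $\hat w_{t+1}^{(s)}:=\mathrm{prox}_{\eta_t\psi}(w_t^{(s)}-\eta_tv_t^{(s)})$, $w_{t+1}^{(s)}:=(1-\gamma_t)w_t^{(s)}+\gamma_t\hat w_{t+1}^{(s)}$. Finally $\tilde w_s:=w_{m+1}^{(s)}$. $\mathbb{E}$ denotes total expectation over all randomness. *)

theory Defs
  imports "HOL-Analysis.Analysis" "HOL-Probability.Probability"
begin

text \<open>Proper closed convex psi : R^d -> R \<union> {+\<infinity>} is represented by its effective
  domain D (nonempty, convex) and its finite values psi on D; closedness = closed epigraph.\<close>

definition prox :: "'a::euclidean_space set \<Rightarrow> ('a \<Rightarrow> real) \<Rightarrow> real \<Rightarrow> 'a \<Rightarrow> 'a" where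
  "prox D psi eta w = (THE z. z \<in> D \<and>
     (\<forall>y\<in>D. eta * psi z + (1/2) * (norm (z - w))\<^sup>2 \<le> eta * psi y + (1/2) * (norm (y - w))\<^sup>2))"

definition fullgrad :: "nat \<Rightarrow> (nat \<Rightarrow> 'a \<Rightarrow> 'a::real_vector) \<Rightarrow> 'a \<Rightarrow> 'a" where
  "fullgrad n gf w = (1 / real n) *\<^sub>R (\<Sum>i<n. gf i w)"

definition grad_map :: "'a::euclidean_space set \<Rightarrow> ('a \<Rightarrow> real) \<Rightarrow> nat \<Rightarrow> (nat \<Rightarrow> 'a \<Rightarrow> 'a) \<Rightarrow> real \<Rightarrow> 'a \<Rightarrow> 'a" where
  "grad_map D psi n gf eta w = (1 / eta) *\<^sub>R (w - prox D psi eta (w - eta *\<^sub>R fullgrad n gf w))"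

fun sarah_inner :: "'a::euclidean_space set \<Rightarrow> ('a \<Rightarrow> real) \<Rightarrow> nat \<Rightarrow> (nat \<Rightarrow> 'a \<Rightarrow> 'a) \<Rightarrow> nat
     \<Rightarrow> (nat \<Rightarrow> real) \<Rightarrow> (nat \<Rightarrow> real) \<Rightarrow> (nat \<Rightarrow> nat set) \<Rightarrow> 'a \<Rightarrow> nat \<Rightarrow> 'a \<times> 'a" where
  "sarah_inner D psi n gf b eta gam B w0 0 = (w0, fullgrad n gf w0)"
| "sarah_inner D psi n gf b eta gam B w0 (Suc t) =
     (let (w, v) = sarah_inner D psi n gf b eta gam B w0 t;
          w' = (1 - gam t) *\<^sub>R w + gam t *\<^sub>R prox D psi (eta t) (w - eta t *\<^sub>R v)
      in (w', v + (1 / real b) *\<^sub>R (\<Sum>i\<in>B (Suc t). gf i w' - gf i w)))"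

text \<open>Snapshot points tilde w_s; beta (s,t) is the inner batch of step t in outer iteration s.\<close>
fun sarah_snap :: "'a::euclidean_space set \<Rightarrow> ('a \<Rightarrow> real) \<Rightarrow> nat \<Rightarrow> (nat \<Rightarrow> 'a \<Rightarrow> 'a) \<Rightarrow> nat
     \<Rightarrow> (nat \<Rightarrow> real) \<Rightarrow> (nat \<Rightarrow> real) \<Rightarrow> nat \<Rightarrow> (nat \<times> nat \<Rightarrow> nat set) \<Rightarrow> 'a \<Rightarrow> nat \<Rightarrow> 'a" where
  "sarah_snap D psi n gf b eta gam m beta w0 0 = w0"
| "sarah_snap D psi n gf b eta gam m beta w0 (Suc s) =
     fst (sarah_inner D psi n gf b eta gam (\<lambda>t. beta (Suc s, t))
            (sarah_snap D psi n gf b eta gam m beta w0 s) (Suc m))"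

text \<open>Iterate w_t^(s), for s \<ge> 1.\<close>
definition sarah_iter :: "'a::euclidean_space set \<Rightarrow> ('a \<Rightarrow> real) \<Rightarrow> nat \<Rightarrow> (nat \<Rightarrow> 'a \<Rightarrow> 'a) \<Rightarrow> nat
     \<Rightarrow> (nat \<Rightarrow> real) \<Rightarrow> (nat \<Rightarrow> real) \<Rightarrow> nat \<Rightarrow> (nat \<times> nat \<Rightarrow> nat set) \<Rightarrow> 'a \<Rightarrow> nat \<Rightarrow> nat \<Rightarrow> 'a" where
  "sarah_iter D psi n gf b eta gam m beta w0 s t =
     fst (sarah_inner D psi n gf b eta gam (\<lambda>t. beta (s, t))
            (sarah_snap D psi n gf b eta gam m beta w0 (s - 1)) t)"

text \<open>All possible realisations of the inner batches: for each s = 1..S, t = 1..m an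
  independent uniformly random subset of {0..n-1} of size b (indices are 0-based).\<close>
definition batch_space :: "nat \<Rightarrow> nat \<Rightarrow> nat \<Rightarrow> nat \<Rightarrow> (nat \<times> nat \<Rightarrow> nat set) set" where
  "batch_space n b S m = ({1..S} \<times> {1..m}) \<rightarrow>\<^sub>E {B. B \<subseteq> {..<n} \<and> card B = b}"

definition ps_omega :: "nat \<Rightarrow> nat \<Rightarrow> real" where
  "ps_omega n b = 3 * (real n - real b) / (2 * real b * (real n - 1))"

definition ps_gamma :: "real \<Rightarrow> nat \<Rightarrow> nat \<Rightarrow> real" where
  "ps_gamma L n b = 1 / (L * sqrt (ps_omega n b * real (n div b)))"

definition ps_eta :: "nat \<Rightarrow> nat \<Rightarrow> real" where
  "ps_eta n b = 2 * sqrt (ps_omega n b * real (n div b)) / (4 * sqrt (ps_omega n b * real (n div b)) + 1)"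

end

theory Submission
  imports Defs
begin

text \<open>
  Write \<open>d\<^sub>t\<close> for the proximal step of the \<open>t\<close>-th inner iteration and \<open>e\<^sub>t = v\<^sub>t - \<nabla>f(w\<^sub>t)\<close> for the
  error of the SARAH estimator. The descent lemma and the variational characterisation of the
  proximal operator give \<open>F(w\<^sub>t\<^sub>+\<^sub>1) \<le> F(w\<^sub>t) + \<gamma>/2 \<parallel>e\<^sub>t\<parallel>\<^sup>2 - 3\<gamma>/2 \<parallel>d\<^sub>t\<parallel>\<^sup>2\<close> as soon as
  \<open>1/\<eta> - L\<gamma>/2 \<ge> 2\<close>, while nonexpansiveness of the proximal operator gives
  \<open>\<eta>\<^sup>2 \<parallel>G\<^sub>\<eta>(w\<^sub>t)\<parallel>\<^sup>2 \<le> 2 \<parallel>d\<^sub>t\<parallel>\<^sup>2 + 2 \<eta>\<^sup>2 \<parallel>e\<^sub>t\<parallel>\<^sup>2\<close>. Averaging over the batch freshly drawn at step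
  \<open>t + 1\<close>, the variance formula for sampling without replacement yields
  \<open>\<bbbE>\<parallel>e\<^sub>t\<^sub>+\<^sub>1\<parallel>\<^sup>2 \<le> \<bbbE>\<parallel>e\<^sub>t\<parallel>\<^sup>2 + \<rho> L\<^sup>2 \<gamma>\<^sup>2 \<bbbE>\<parallel>d\<^sub>t\<parallel>\<^sup>2\<close> with \<open>\<rho> = (n - b) / (b (n - 1))\<close>. Since the
  error vanishes at each full-gradient snapshot and the step sizes make \<open>\<rho> L\<^sup>2 \<gamma>\<^sup>2 m \<le> 2/3\<close>,
  the accumulated errors are absorbed by the decrease within every epoch; telescoping over the
  epochs bounds the summed gradient mappings by \<open>2 (F(w\<^sub>0) - F\<^sup>\<star>) / (\<gamma> \<eta>\<^sup>2)\<close>.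
\<close>

section \<open>Proximal operator\<close>

lemma closed_epigraph_bdd_below_on_compact:
  fixes psi :: "'a::euclidean_space \<Rightarrow> real"
  assumes cl: "closed {(x, t). x \<in> D \<and> psi x \<le> t}" and K: "compact K"
  shows "\<exists>M. \<forall>x\<in>D \<inter> K. M \<le> psi x"
proof (rule ccontr)
  assume nb: "\<not> ?thesis"
  let ?E = "{(x, t). x \<in> D \<and> psi x \<le> t}"
  define A where "A k = (\<lambda>x. (x, - real k)) -` ?E" for k :: nat
  have clA: "closed (A k)" for k
    unfolding A_def by (rule closed_vimage[OF cl]) (intro continuous_intros)
  have "K \<inter> \<Inter> (A ` UNIV) \<noteq> {}"
  proof (rule compact_imp_fip_image[OF K])
    fix I' :: "nat set" assume fI: "finite I'"
    from nb have "\<exists>x\<in>D \<inter> K. psi x < - real (Max (insert 0 I'))"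
      by (meson not_le)
    then obtain x where x: "x \<in> D" "x \<in> K" "psi x < - real (Max (insert 0 I'))" by auto
    have "x \<in> A j" if "j \<in> I'" for j
    proof -
      have "j \<le> Max (insert 0 I')" using fI that by auto
      then show ?thesis using x unfolding A_def by auto
    qed
    then show "K \<inter> \<Inter> (A ` I') \<noteq> {}" using x by auto
  qed (use clA in auto)
  then obtain x where x: "\<And>k. x \<in> A k" by auto
  obtain k :: nat where "k > - psi x" using reals_Archimedean2 by blast
  with x[of k] show False unfolding A_def by auto
qed

text \<open>Convexity propagates the lower bound on the unit ball around \<open>z0\<close> to a bound growing
  at most linearly: the point at distance 1 from \<open>z0\<close> towards \<open>z\<close> is a convex combination of them.\<close>

lemma convex_closed_epigraph_linear_lower_bound:
  fixes psi :: "'a::euclidean_space \<Rightarrow> real"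
  assumes cl: "closed {(x, t). x \<in> D \<and> psi x \<le> t}" and cv: "convex_on D psi"
    and z0: "z0 \<in> D"
  shows "\<exists>K\<ge>0. \<forall>z\<in>D. - K * (1 + norm (z - z0)) \<le> psi z"
proof -
  obtain M where M: "\<And>x. x \<in> D \<Longrightarrow> norm (x - z0) \<le> 1 \<Longrightarrow> M \<le> psi x"
    using closed_epigraph_bdd_below_on_compact[OF cl compact_cball[of z0 1]]
    by (metis IntI dist_norm mem_cball norm_minus_commute)
  define K where "K = \<bar>M\<bar> + \<bar>psi z0\<bar>"
  have "- K * (1 + norm (z - z0)) \<le> psi z" if z: "z \<in> D" for z
  proof (cases "norm (z - z0) \<le> 1")
    case True
    then have "M \<le> psi z" using M[OF z] by simp
    moreover have "- K * (1 + norm (z - z0)) \<le> - \<bar>M\<bar>"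
      unfolding K_def by (simp add: algebra_simps)
    ultimately show ?thesis by linarith
  next
    case False
    define R where "R = norm (z - z0)"
    have R1: "R > 1" using False R_def by auto
    define y where "y = (1 - 1/R) *\<^sub>R z0 + (1/R) *\<^sub>R z"
    have yD: "y \<in> D" unfolding y_def
      using cv z z0 R1 unfolding convex_on_def convex_def by auto
    have "y - z0 = (1/R) *\<^sub>R (z - z0)" unfolding y_def by (simp add: algebra_simps)
    then have "norm (y - z0) = (1/R) * R" unfolding R_def by simp
    then have "norm (y - z0) = 1" using R1 by simp
    then have My: "M \<le> psi y" using M[OF yD] by simp
    have "psi y \<le> (1 - 1/R) * psi z0 + (1/R) * psi z"
      unfolding y_def using convex_onD[OF cv, of "1/R" z0 z] R1 z z0 by auto
    then have "R * M \<le> R * ((1 - 1/R) * psi z0 + (1/R) * psi z)" using My R1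
      by (intro mult_left_mono) auto
    also have "\<dots> = (R - 1) * psi z0 + psi z" using R1 by (simp add: field_simps)
    finally have "R * M \<le> (R - 1) * psi z0 + psi z" .
    moreover have "- K * R \<le> R * M - (R - 1) * psi z0"
    proof -
      have "R * (- \<bar>M\<bar>) \<le> R * M" using R1 by (intro mult_left_mono) auto
      moreover have "(R - 1) * psi z0 \<le> (R - 1) * \<bar>psi z0\<bar>" using R1 by (intro mult_left_mono) auto
      moreover have "(R - 1) * \<bar>psi z0\<bar> \<le> R * \<bar>psi z0\<bar>" by (simp add: algebra_simps)
      ultimately show ?thesis unfolding K_def by (simp add: algebra_simps)
    qed
    moreover have "- K * (1 + R) \<le> - K * R" unfolding K_def by (simp add: algebra_simps)
    ultimately show ?thesis unfolding R_def by linarith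
  qed
  moreover have "K \<ge> 0" unfolding K_def by simp
  ultimately show ?thesis by blast
qed

lemma prox_objective_coercive:
  fixes psi :: "'a::euclidean_space \<Rightarrow> real"
  assumes lower: "\<And>z. z \<in> D \<Longrightarrow> - K * (1 + norm (z - z0)) \<le> psi z"
    and K: "K \<ge> 0" and eta: "eta > 0"
  shows "\<exists>R. \<forall>y\<in>D. R < norm (y - u) \<longrightarrow> M \<le> eta * psi y + (1/2) * (norm (y - u))\<^sup>2"
proof -
  define c where "c = eta * K * (1 + norm (u - z0))"
  have c0: "c \<ge> 0" unfolding c_def using K eta by simp
  have "M \<le> eta * psi y + (1/2) * (norm (y - u))\<^sup>2"
    if yD: "y \<in> D" and yR: "2 * (eta * K) + 2 + \<bar>M\<bar> + c < norm (y - u)" for y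
  proof -
    define r where "r = norm (y - u)"
    have "norm (y - z0) \<le> r + norm (u - z0)"
      unfolding r_def using norm_triangle_ineq[of "y - u" "u - z0"] by simp
    then have "K * (1 + norm (y - z0)) \<le> K * (1 + r + norm (u - z0))"
      using K by (intro mult_left_mono) auto
    then have "- K * (1 + r + norm (u - z0)) \<le> psi y" using lower[OF yD] by linarith
    then have "eta * (- K * (1 + r + norm (u - z0))) \<le> eta * psi y"
      using eta by (intro mult_left_mono) auto
    define X where "X = r * ((1/2) * r - eta * K)"
    have Phi: "- c + X \<le> eta * psi y + (1/2) * r\<^sup>2"
      using \<open>eta * _ \<le> eta * psi y\<close> unfolding c_def X_def by (simp add: algebra_simps power2_eq_square)
    have "0 \<le> eta * K" using K eta by simp
    then have "1 \<le> (1/2) * r - eta * K" "\<bar>M\<bar> + c \<le> r"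
      using yR c0 unfolding r_def by linarith+
    then have "(\<bar>M\<bar> + c) * 1 \<le> X" unfolding X_def using c0
      by (intro mult_mono) auto
    then have "M \<le> - c + X" by simp
    then show ?thesis using Phi unfolding r_def by (rule order_trans)
  qed
  then show ?thesis by blast
qed

lemma prox_objective_has_minimizer:
  fixes psi :: "'a::euclidean_space \<Rightarrow> real"
  assumes cl: "closed {(x, t). x \<in> D \<and> psi x \<le> t}" and cv: "convex_on D psi"
    and ne: "D \<noteq> {}" and eta: "eta > 0"
  shows "\<exists>p\<in>D. \<forall>y\<in>D. eta * psi p + (1/2) * (norm (p - u))\<^sup>2 \<le> eta * psi y + (1/2) * (norm (y - u))\<^sup>2"
proof -
  define Phi where "Phi y = eta * psi y + (1/2) * (norm (y - u))\<^sup>2" for y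
  obtain z0 where z0: "z0 \<in> D" using ne by auto
  obtain K where "K \<ge> 0" "\<And>z. z \<in> D \<Longrightarrow> - K * (1 + norm (z - z0)) \<le> psi z"
    using convex_closed_epigraph_linear_lower_bound[OF cl cv z0] by auto
  then obtain R0 where R0: "\<And>y. y \<in> D \<Longrightarrow> R0 < norm (y - u) \<Longrightarrow> Phi z0 \<le> Phi y"
    using prox_objective_coercive[OF _ _ eta, of D K z0 psi u "Phi z0"] unfolding Phi_def by blast
  define R where "R = max R0 (norm (z0 - u))"
  obtain lo where lo: "\<And>z. z \<in> D \<Longrightarrow> norm (z - u) \<le> R \<Longrightarrow> lo \<le> psi z"
    using closed_epigraph_bdd_below_on_compact[OF cl compact_cball[of u R]]
    by (metis IntI dist_norm mem_cball norm_minus_commute)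
  define T where "T = Phi z0 / eta"
  \<comment> \<open>Minimize over the compact part \<open>C\<close> of the epigraph, where the objective is continuous;
    outside \<open>C\<close> it exceeds \<open>Phi z0\<close>.\<close>
  define C where "C = {(x, t). x \<in> D \<and> psi x \<le> t} \<inter> (cball u R \<times> {lo..T})"
  have inC: "(y, psi y) \<in> C" if "y \<in> D" "norm (y - u) \<le> R" "psi y \<le> T" for y
    unfolding C_def using that lo[OF that(1,2)] by (auto simp: dist_norm norm_minus_commute)
  have z0C: "(z0, psi z0) \<in> C"
    by (rule inC[OF z0]) (use eta in \<open>auto simp: R_def T_def Phi_def field_simps\<close>)
  have "compact C" unfolding C_def
    by (intro closed_Int_compact cl compact_Times compact_cball compact_Icc)
  moreover define g :: "'a \<times> real \<Rightarrow> real" where "g = (\<lambda>(x, t). eta * t + (1/2) * (norm (x - u))\<^sup>2)"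
  moreover have "continuous_on C g" unfolding g_def by (auto intro!: continuous_intros simp: split_beta)
  ultimately obtain pt where ptC: "pt \<in> C" and ptmin: "\<And>q. q \<in> C \<Longrightarrow> g pt \<le> g q"
    using continuous_attains_inf[of C g] z0C by blast
  obtain p t where pt: "pt = (p, t)" by fastforce
  have pD: "p \<in> D" and "psi p \<le> t" using ptC unfolding pt C_def by auto
  then have Phip: "Phi p \<le> eta * t + (1/2) * (norm (p - u))\<^sup>2"
    unfolding Phi_def using eta by simp
  have Phip_z0: "Phi p \<le> Phi z0" using Phip ptmin[OF z0C] unfolding Phi_def pt g_def by simp
  have "Phi p \<le> Phi y" if yD: "y \<in> D" for y
  proof (cases "norm (y - u) \<le> R \<and> psi y \<le> T")
    case True
    then show ?thesis using ptmin[OF inC[OF yD]] Phip unfolding Phi_def pt g_def by auto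
  next
    case False
    have "Phi z0 \<le> Phi y"
    proof (cases "norm (y - u) \<le> R")
      case True
      with False have "T < psi y" by simp
      then have "Phi z0 < eta * psi y" using eta unfolding T_def by (simp add: field_simps)
      then show ?thesis using zero_le_power2[of "norm (y - u)"] unfolding Phi_def by linarith
    next
      case False
      then show ?thesis using R0[OF yD] unfolding R_def by simp
    qed
    then show ?thesis using Phip_z0 by linarith
  qed
  then show ?thesis using pD unfolding Phi_def by blast
qed

lemma norm_add_scaleR_power2:
  fixes a b :: "'a::real_inner"
  shows "(norm (a + c *\<^sub>R b))\<^sup>2 = (norm a)\<^sup>2 + 2 * c * (a \<bullet> b) + c\<^sup>2 * (norm b)\<^sup>2"
  by (simp only: power2_norm_eq_inner) (simp add: inner_add_left inner_add_right inner_commute algebra_simps power2_eq_square)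

lemma prox_minimizer_variational_ineq:
  fixes psi :: "'a::euclidean_space \<Rightarrow> real"
  assumes cv: "convex_on D psi" and pD: "p \<in> D" and eta: "eta \<ge> 0"
    and pmin: "\<forall>y\<in>D. eta * psi p + (1/2) * (norm (p - u))\<^sup>2 \<le> eta * psi y + (1/2) * (norm (y - u))\<^sup>2"
    and yD: "y \<in> D"
  shows "(u - p) \<bullet> (y - p) \<le> eta * (psi y - psi p)"
proof (rule ccontr)
  define a where "a = eta * (psi y - psi p) - (u - p) \<bullet> (y - p)"
  define q where "q = (norm (y - p))\<^sup>2"
  assume "\<not> ?thesis"
  then have a0: "a < 0" unfolding a_def by simp
  have q0: "q \<ge> 0" unfolding q_def by simp
  have key: "0 \<le> a + lam * q / 2" if l0: "0 < lam" and l1: "lam \<le> 1" for lam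
  proof -
    define yl where "yl = (1 - lam) *\<^sub>R p + lam *\<^sub>R y"
    have ylD: "yl \<in> D" unfolding yl_def using cv pD yD l0 l1
      unfolding convex_on_def convex_def by auto
    have psil: "psi yl \<le> (1 - lam) * psi p + lam * psi y"
      unfolding yl_def using convex_onD[OF cv, of lam p y] l0 l1 pD yD by auto
    have yle: "yl - u = (p - u) + lam *\<^sub>R (y - p)" unfolding yl_def by (simp add: algebra_simps)
    have nl: "(norm (yl - u))\<^sup>2 = (norm (p - u))\<^sup>2 + 2 * lam * ((p - u) \<bullet> (y - p)) + lam\<^sup>2 * q"
      unfolding q_def yle by (rule norm_add_scaleR_power2)
    have "eta * psi p + (1/2) * (norm (p - u))\<^sup>2 \<le> eta * psi yl + (1/2) * (norm (yl - u))\<^sup>2"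
      using pmin ylD by auto
    also have "\<dots> \<le> eta * ((1 - lam) * psi p + lam * psi y) + (1/2) * (norm (yl - u))\<^sup>2"
      using psil eta by (simp add: mult_left_mono)
    finally have "eta * psi p + (1/2) * (norm (p - u))\<^sup>2 \<le> eta * ((1 - lam) * psi p + lam * psi y)
       + (1/2) * ((norm (p - u))\<^sup>2 + 2 * lam * ((p - u) \<bullet> (y - p)) + lam\<^sup>2 * q)" unfolding nl .
    moreover have "(p - u) \<bullet> (y - p) = - ((u - p) \<bullet> (y - p))"
      by (simp add: inner_diff_left)
    ultimately have "0 \<le> lam * (a + lam * q / 2)" unfolding a_def
      by (simp add: algebra_simps power2_eq_square)
    then show ?thesis using l0 by (simp add: zero_le_mult_iff)
  qed
  define lam where "lam = min 1 (- a / (q + 1))"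
  have l0: "lam > 0" unfolding lam_def using a0 q0 by (simp add: field_simps)
  have l1: "lam \<le> 1" unfolding lam_def by simp
  have "lam * q \<le> (- a / (q + 1)) * q" unfolding lam_def using q0 by (intro mult_right_mono) auto
  also have "\<dots> < - a" using a0 q0 by (simp add: field_simps)
  finally have "lam * q / 2 < - a" using a0 by linarith
  with key[OF l0 l1] show False by linarith
qed

lemma variational_ineq_nonexpansive:
  fixes p1 p2 u1 u2 :: "'a::euclidean_space"
  assumes v1: "(u1 - p1) \<bullet> (p2 - p1) \<le> eta * (psi p2 - psi p1)"
    and v2: "(u2 - p2) \<bullet> (p1 - p2) \<le> eta * (psi p1 - psi p2)"
  shows "norm (p1 - p2) \<le> norm (u1 - u2)"
proof -
  have e: "(u1 - p1) \<bullet> (p2 - p1) + (u2 - p2) \<bullet> (p1 - p2) = (norm (p1 - p2))\<^sup>2 - (u1 - u2) \<bullet> (p1 - p2)"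
    by (simp add: power2_norm_eq_inner inner_diff_left inner_diff_right inner_commute algebra_simps)
  have "(norm (p1 - p2))\<^sup>2 \<le> (u1 - u2) \<bullet> (p1 - p2)" using v1 v2 e by (simp add: algebra_simps)
  also have "\<dots> \<le> norm (u1 - u2) * norm (p1 - p2)" by (rule norm_cauchy_schwarz)
  finally have h: "norm (p1 - p2) * norm (p1 - p2) \<le> norm (u1 - u2) * norm (p1 - p2)"
    by (simp add: power2_eq_square)
  show ?thesis
  proof (cases "norm (p1 - p2) = 0")
    case True then show ?thesis by simp
  next
    case False then have "norm (p1 - p2) > 0" by simp
    with h show ?thesis by simp
  qed
qed

lemma prox_characterization:
  fixes psi :: "'a::euclidean_space \<Rightarrow> real"
  assumes cl: "closed {(x, t). x \<in> D \<and> psi x \<le> t}" and cv: "convex_on D psi"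
    and ne: "D \<noteq> {}" and eta: "eta > 0"
  shows "prox D psi eta u \<in> D \<and> (\<forall>y\<in>D. (u - prox D psi eta u) \<bullet> (y - prox D psi eta u)
            \<le> eta * (psi y - psi (prox D psi eta u)))"
proof -
  obtain p where pD: "p \<in> D" and pmin: "\<forall>y\<in>D. eta * psi p + (1/2) * (norm (p - u))\<^sup>2 \<le> eta * psi y + (1/2) * (norm (y - u))\<^sup>2"
    using prox_objective_has_minimizer[OF cl cv ne eta] by blast
  have vp: "\<forall>y\<in>D. (u - p) \<bullet> (y - p) \<le> eta * (psi y - psi p)"
    using prox_minimizer_variational_ineq[OF cv pD _ pmin] eta by auto
  have "prox D psi eta u = p" unfolding prox_def
  proof (rule the_equality)
    show "p \<in> D \<and> (\<forall>y\<in>D. eta * psi p + 1 / 2 * (norm (p - u))\<^sup>2 \<le> eta * psi y + 1 / 2 * (norm (y - u))\<^sup>2)"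
      using pD pmin by blast
  next
    fix z assume z: "z \<in> D \<and> (\<forall>y\<in>D. eta * psi z + 1 / 2 * (norm (z - u))\<^sup>2 \<le> eta * psi y + 1 / 2 * (norm (y - u))\<^sup>2)"
    then have vz: "\<forall>y\<in>D. (u - z) \<bullet> (y - z) \<le> eta * (psi y - psi z)"
      using prox_minimizer_variational_ineq[OF cv _ _ ] eta by auto
    have "norm (z - p) \<le> norm (u - u)"
      by (rule variational_ineq_nonexpansive[of u z p eta psi u]) (use vz vp pD z in auto)
    then show "z = p" by simp
  qed
  then show ?thesis using pD vp by simp
qed

section \<open>Smooth finite sums\<close>

lemma descent_lemma:
  fixes F :: "'a::euclidean_space \<Rightarrow> real"
  assumes d: "\<And>x. (F has_derivative (\<lambda>h. G x \<bullet> h)) (at x)"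
    and lip: "\<And>x y. norm (G x - G y) \<le> L * norm (x - y)"
  shows "F y \<le> F x + G x \<bullet> (y - x) + L / 2 * (norm (y - x))\<^sup>2"
proof -
  define h where "h = y - x"
  define g where "g t = F (x + t *\<^sub>R h) - t * (G x \<bullet> h) - L / 2 * t\<^sup>2 * (norm h)\<^sup>2" for t :: real
  have "g 1 \<le> g 0"
  proof (rule DERIV_nonpos_imp_nonincreasing[of 0 1 g])
    fix t :: real assume t0: "0 \<le> t" and t1: "t \<le> 1"
    have d1: "((\<lambda>t. x + t *\<^sub>R h) has_derivative (\<lambda>s. s *\<^sub>R h)) (at t)"
      by (auto intro!: derivative_eq_intros)
    have d2: "((\<lambda>t. F (x + t *\<^sub>R h)) has_derivative (\<lambda>s. G (x + t *\<^sub>R h) \<bullet> (s *\<^sub>R h))) (at t)"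
      using has_derivative_compose[OF d1 d] by simp
    have d3: "((\<lambda>t. F (x + t *\<^sub>R h)) has_real_derivative (G (x + t *\<^sub>R h) \<bullet> h)) (at t)"
    proof -
      have "(\<lambda>s. G (x + t *\<^sub>R h) \<bullet> (s *\<^sub>R h)) = (*) (G (x + t *\<^sub>R h) \<bullet> h)"
        by (auto simp: fun_eq_iff mult.commute)
      then show ?thesis unfolding has_field_derivative_def using d2 by simp
    qed
    have dg: "(g has_real_derivative (G (x + t *\<^sub>R h) \<bullet> h - G x \<bullet> h - L * t * (norm h)\<^sup>2)) (at t)"
      unfolding g_def by (auto intro!: derivative_eq_intros d3)
    have "G (x + t *\<^sub>R h) \<bullet> h - G x \<bullet> h = (G (x + t *\<^sub>R h) - G x) \<bullet> h" by (simp add: inner_diff_left)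
    also have "\<dots> \<le> norm (G (x + t *\<^sub>R h) - G x) * norm h" by (rule norm_cauchy_schwarz)
    also have "\<dots> \<le> (L * norm (t *\<^sub>R h)) * norm h" using lip[of "x + t *\<^sub>R h" x]
      by (intro mult_right_mono) auto
    also have "\<dots> = L * t * (norm h)\<^sup>2" using t0 by (simp add: power2_eq_square)
    finally show "\<exists>y. (g has_real_derivative y) (at t) \<and> y \<le> 0" using dg by (intro exI[of _ _]) auto
  qed simp
  then show ?thesis unfolding g_def h_def by simp
qed

lemma norm_sum_power2_le:
  fixes a :: "nat \<Rightarrow> 'a::real_normed_vector"
  shows "(norm (\<Sum>i<n. a i))\<^sup>2 \<le> real n * (\<Sum>i<n. (norm (a i))\<^sup>2)"
proof -
  have "norm (\<Sum>i<n. a i) \<le> (\<Sum>i<n. norm (a i))" by (rule norm_sum)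
  then have "(norm (\<Sum>i<n. a i))\<^sup>2 \<le> (\<Sum>i<n. norm (a i))\<^sup>2"
    by (intro power_mono) auto
  also have "\<dots> \<le> (\<Sum>i<n. (norm (a i))\<^sup>2) * real (card {..<n})" by (rule sum_squared_le_sum_of_squares)
  finally show ?thesis by (simp add: mult.commute)
qed

lemma fullgrad_lipschitz:
  fixes gf :: "nat \<Rightarrow> 'a::euclidean_space \<Rightarrow> 'a"
  assumes n: "n \<ge> 1" and A2: "\<forall>w w'. (\<Sum>i<n. (norm (gf i w - gf i w'))\<^sup>2) / real n \<le> L\<^sup>2 * (norm (w - w'))\<^sup>2"
    and L: "L \<ge> 0"
  shows "norm (fullgrad n gf w - fullgrad n gf w') \<le> L * norm (w - w')"
proof -
  have e: "fullgrad n gf w - fullgrad n gf w' = (1 / real n) *\<^sub>R (\<Sum>i<n. gf i w - gf i w')"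
    unfolding fullgrad_def by (simp add: sum_subtractf scaleR_diff_right)
  have "(norm (fullgrad n gf w - fullgrad n gf w'))\<^sup>2 = (norm (\<Sum>i<n. gf i w - gf i w'))\<^sup>2 / (real n)\<^sup>2"
    unfolding e using n by (simp add: power_divide)
  also have "\<dots> \<le> real n * (\<Sum>i<n. (norm (gf i w - gf i w'))\<^sup>2) / (real n)\<^sup>2"
    by (intro divide_right_mono norm_sum_power2_le) simp
  also have "\<dots> = (\<Sum>i<n. (norm (gf i w - gf i w'))\<^sup>2) / real n" using n by (simp add: power2_eq_square)
  also have "\<dots> \<le> (L * norm (w - w'))\<^sup>2" using A2 by (simp add: power_mult_distrib)
  finally show ?thesis using L by (simp add: power2_le_iff_abs_le)
qed

lemma has_derivative_average:
  fixes f :: "nat \<Rightarrow> 'a::euclidean_space \<Rightarrow> real"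
  assumes grad: "\<forall>i<n. \<forall>x. (f i has_derivative (\<lambda>h. gf i x \<bullet> h)) (at x)"
  shows "((\<lambda>w. (\<Sum>i<n. f i w) / real n) has_derivative (\<lambda>h. fullgrad n gf x \<bullet> h)) (at x)"
proof -
  have "((\<lambda>w. \<Sum>i<n. f i w) has_derivative (\<lambda>h. \<Sum>i<n. gf i x \<bullet> h)) (at x)"
    using grad by (intro has_derivative_sum) auto
  from has_derivative_mult_right[OF this, of "1 / real n"]
  have "((\<lambda>w. (\<Sum>i<n. f i w) / real n) has_derivative (\<lambda>h. (\<Sum>i<n. gf i x \<bullet> h) / real n)) (at x)"
    by simp
  moreover have "(\<lambda>h. (\<Sum>i<n. gf i x \<bullet> h) / real n) = (\<lambda>h. fullgrad n gf x \<bullet> h)"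
    unfolding fullgrad_def by (auto simp: inner_sum_left)
  ultimately show ?thesis by simp
qed

section \<open>Mini-batches sampled without replacement\<close>

abbreviation batches :: "nat \<Rightarrow> nat \<Rightarrow> nat set set" where
  "batches n b \<equiv> {B. B \<subseteq> {..<n} \<and> card B = b}"

lemma finite_batches: "finite (batches n b)"
  by (rule finite_subset[of _ "Pow {..<n}"]) auto

lemma card_batches: "card (batches n b) = n choose b"
  using n_subsets[of "{..<n}" b] by simp

lemma subsets_card_containing_insert:
  assumes fA: "finite A" and iA: "i \<in> A" and k: "k \<ge> 1" and iT: "i \<notin> T"
  shows "{B. B \<subseteq> A \<and> card B = k \<and> insert i T \<subseteq> B}
       = insert i ` {C. C \<subseteq> A - {i} \<and> card C = k - 1 \<and> T \<subseteq> C}"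
    and "inj_on (insert i) {C. C \<subseteq> A - {i} \<and> card C = k - 1 \<and> T \<subseteq> C}"
proof -
  show "{B. B \<subseteq> A \<and> card B = k \<and> insert i T \<subseteq> B}
       = insert i ` {C. C \<subseteq> A - {i} \<and> card C = k - 1 \<and> T \<subseteq> C}"
  proof (intro equalityI subsetI)
    fix B assume "B \<in> {B. B \<subseteq> A \<and> card B = k \<and> insert i T \<subseteq> B}"
    then have B: "B \<subseteq> A" "card B = k" "insert i T \<subseteq> B" by auto
    have fB: "finite B" using B(1) fA finite_subset by blast
    have "B = insert i (B - {i})" using B(3) by auto
    moreover have "B - {i} \<in> {C. C \<subseteq> A - {i} \<and> card C = k - 1 \<and> T \<subseteq> C}"
      using B fB iT by (auto simp: card_Diff_singleton)
    ultimately show "B \<in> insert i ` {C. C \<subseteq> A - {i} \<and> card C = k - 1 \<and> T \<subseteq> C}" by blast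
  next
    fix B assume "B \<in> insert i ` {C. C \<subseteq> A - {i} \<and> card C = k - 1 \<and> T \<subseteq> C}"
    then obtain C where C: "C \<subseteq> A - {i}" "card C = k - 1" "T \<subseteq> C" and BC: "B = insert i C" by auto
    have fC: "finite C" using C(1) fA finite_subset by blast
    have "card B = k" using BC C fC k by (auto simp: card_insert_if)
    then show "B \<in> {B. B \<subseteq> A \<and> card B = k \<and> insert i T \<subseteq> B}" using BC C iA by auto
  qed
  show "inj_on (insert i) {C. C \<subseteq> A - {i} \<and> card C = k - 1 \<and> T \<subseteq> C}"
  proof (rule inj_onI)
    fix C1 C2 assume "C1 \<in> {C. C \<subseteq> A - {i} \<and> card C = k - 1 \<and> T \<subseteq> C}"
      "C2 \<in> {C. C \<subseteq> A - {i} \<and> card C = k - 1 \<and> T \<subseteq> C}" "insert i C1 = insert i C2"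
    then show "C1 = C2"
      by (metis (no_types, lifting) Diff_insert_absorb Diff_subset_conv mem_Collect_eq subset_Diff_insert)
  qed
qed

lemma card_batches_containing:
  assumes "i < n" "1 \<le> b"
  shows "card {B. B \<subseteq> {..<n} \<and> card B = b \<and> i \<in> B} = (n - 1) choose (b - 1)"
proof -
  have "{B. B \<subseteq> {..<n} \<and> card B = b \<and> i \<in> B} = {B. B \<subseteq> {..<n} \<and> card B = b \<and> insert i {} \<subseteq> B}"
    by auto
  also have "card \<dots> = card {C. C \<subseteq> {..<n} - {i} \<and> card C = b - 1 \<and> {} \<subseteq> C}"
    using subsets_card_containing_insert[of "{..<n}" i b "{}"] assms by (simp add: card_image)
  also have "\<dots> = (n - 1) choose (b - 1)" using n_subsets[of "{..<n} - {i}" "b - 1"] assms by simp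
  finally show ?thesis .
qed

definition pair_batch_count :: "nat \<Rightarrow> nat \<Rightarrow> nat" where
  "pair_batch_count n b = (if 2 \<le> b then (n - 2) choose (b - 2) else 0)"

lemma card_batches_containing_pair:
  assumes "i < n" "j < n" "i \<noteq> j" "1 \<le> b"
  shows "card {B. B \<subseteq> {..<n} \<and> card B = b \<and> i \<in> B \<and> j \<in> B} = pair_batch_count n b"
proof -
  have "{B. B \<subseteq> {..<n} \<and> card B = b \<and> i \<in> B \<and> j \<in> B}
      = {B. B \<subseteq> {..<n} \<and> card B = b \<and> insert i {j} \<subseteq> B}"
    by auto
  also have "card \<dots> = card {C. C \<subseteq> {..<n} - {i} \<and> card C = b - 1 \<and> {j} \<subseteq> C}"
    using subsets_card_containing_insert[of "{..<n}" i b "{j}"] assms by (simp add: card_image)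
  also have "\<dots> = (if 2 \<le> b then (n - 2) choose (b - 2) else 0)"
  proof (cases "2 \<le> b")
    case True
    have jA: "j \<in> {..<n} - {i}" using assms by auto
    have "card {C. C \<subseteq> {..<n} - {i} \<and> card C = b - 1 \<and> {j} \<subseteq> C}
        = card {C'. C' \<subseteq> {..<n} - {i} - {j} \<and> card C' = b - 1 - 1 \<and> {} \<subseteq> C'}"
      using subsets_card_containing_insert[of "{..<n} - {i}" j "b - 1" "{}"] jA True by (simp add: card_image)
    also have "\<dots> = (n - 2) choose (b - 2)"
    proof -
      have c1: "card ({..<n} - {i}) = n - 1" using assms by simp
      have "card ({..<n} - {i} - {j}) = n - 1 - 1" using jA c1 by (simp add: card_Diff_singleton)
      then have "card ({..<n} - {i} - {j}) = n - 2" by simp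
      moreover have "b - 1 - 1 = b - 2" by simp
      ultimately show ?thesis using n_subsets[of "{..<n} - {i} - {j}" "b - 1 - 1"] by simp
    qed
    finally show ?thesis using True by simp
  next
    case False
    then have "b = 1" using assms by simp
    then have "{C. C \<subseteq> {..<n} - {i} \<and> card C = b - 1 \<and> {j} \<subseteq> C} = {}"
      by (auto simp: card_eq_0_iff dest: finite_subset)
    then show ?thesis using False by simp
  qed
  finally show ?thesis unfolding pair_batch_count_def .
qed

lemma sum_subset_lessThan_if:
  fixes g :: "nat \<Rightarrow> 'b::comm_monoid_add"
  assumes "B \<subseteq> {..<n}"
  shows "(\<Sum>i\<in>B. g i) = (\<Sum>i<n. if i \<in> B then g i else 0)"
  using sum.inter_restrict[of "{..<n}" g B] assms by (simp add: Int_absorb1)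

lemma sum_batches_sum:
  fixes g :: "nat \<Rightarrow> 'b::real_vector"
  shows "(\<Sum>B\<in>{B. B \<subseteq> {..<n} \<and> card B = b}. \<Sum>i\<in>B. g i)
       = (\<Sum>i<n. real (card {B. B \<subseteq> {..<n} \<and> card B = b \<and> i \<in> B}) *\<^sub>R g i)"
proof -
  let ?Bs = "{B. B \<subseteq> {..<n} \<and> card B = b}"
  have "(\<Sum>B\<in>?Bs. \<Sum>i\<in>B. g i) = (\<Sum>B\<in>?Bs. \<Sum>i<n. if i \<in> B then g i else 0)"
    by (intro sum.cong refl sum_subset_lessThan_if) auto
  also have "\<dots> = (\<Sum>i<n. \<Sum>B\<in>?Bs. if i \<in> B then g i else 0)" by (rule sum.swap)
  also have "\<dots> = (\<Sum>i<n. real (card {B. B \<subseteq> {..<n} \<and> card B = b \<and> i \<in> B}) *\<^sub>R g i)"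
  proof (intro sum.cong refl)
    fix i
    have "(\<Sum>B\<in>?Bs. if i \<in> B then g i else 0) = (\<Sum>B\<in>{B \<in> ?Bs. i \<in> B}. g i)"
      by (rule sum.inter_filter[symmetric]) (rule finite_batches)
    also have "{B \<in> ?Bs. i \<in> B} = {B. B \<subseteq> {..<n} \<and> card B = b \<and> i \<in> B}" by auto
    finally show "(\<Sum>B\<in>?Bs. if i \<in> B then g i else 0) = real (card {B. B \<subseteq> {..<n} \<and> card B = b \<and> i \<in> B}) *\<^sub>R g i"
      by (simp add: sum_constant_scaleR)
  qed
  finally show ?thesis .
qed

lemma sum_batches_double_sum:
  fixes h :: "nat \<Rightarrow> nat \<Rightarrow> real"
  shows "(\<Sum>B\<in>{B. B \<subseteq> {..<n} \<and> card B = b}. \<Sum>i\<in>B. \<Sum>j\<in>B. h i j)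
       = (\<Sum>i<n. \<Sum>j<n. real (card {B. B \<subseteq> {..<n} \<and> card B = b \<and> i \<in> B \<and> j \<in> B}) * h i j)"
proof -
  let ?Bs = "{B. B \<subseteq> {..<n} \<and> card B = b}"
  have "(\<Sum>B\<in>?Bs. \<Sum>i\<in>B. \<Sum>j\<in>B. h i j) = (\<Sum>B\<in>?Bs. \<Sum>i<n. \<Sum>j<n. if i \<in> B \<and> j \<in> B then h i j else 0)"
  proof (rule sum.cong[OF refl])
    fix B assume "B \<in> ?Bs"
    then have B: "B \<subseteq> {..<n}" by auto
    have "(\<Sum>i\<in>B. \<Sum>j\<in>B. h i j) = (\<Sum>i<n. if i \<in> B then (\<Sum>j\<in>B. h i j) else 0)"
      by (rule sum_subset_lessThan_if[OF B])
    also have "\<dots> = (\<Sum>i<n. if i \<in> B then (\<Sum>j<n. if j \<in> B then h i j else 0) else 0)"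
    proof (intro sum.cong refl)
      fix i show "(if i \<in> B then sum (h i) B else 0) = (if i \<in> B then (\<Sum>j<n. if j \<in> B then h i j else 0) else 0)"
        using sum_subset_lessThan_if[OF B, of "h i"] by simp
    qed
    also have "\<dots> = (\<Sum>i<n. \<Sum>j<n. if i \<in> B \<and> j \<in> B then h i j else 0)"
      by (intro sum.cong refl) auto
    finally show "(\<Sum>i\<in>B. \<Sum>j\<in>B. h i j) = (\<Sum>i<n. \<Sum>j<n. if i \<in> B \<and> j \<in> B then h i j else 0)" .
  qed
  also have "\<dots> = (\<Sum>i<n. \<Sum>B\<in>?Bs. \<Sum>j<n. if i \<in> B \<and> j \<in> B then h i j else 0)" by (rule sum.swap)
  also have "\<dots> = (\<Sum>i<n. \<Sum>j<n. \<Sum>B\<in>?Bs. if i \<in> B \<and> j \<in> B then h i j else 0)"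
    by (intro sum.cong refl sum.swap)
  also have "\<dots> = (\<Sum>i<n. \<Sum>j<n. real (card {B. B \<subseteq> {..<n} \<and> card B = b \<and> i \<in> B \<and> j \<in> B}) * h i j)"
  proof (intro sum.cong refl)
    fix i j
    have "(\<Sum>B\<in>?Bs. if i \<in> B \<and> j \<in> B then h i j else 0) = (\<Sum>B\<in>{B \<in> ?Bs. i \<in> B \<and> j \<in> B}. h i j)"
      by (rule sum.inter_filter[symmetric]) (rule finite_batches)
    also have "{B \<in> ?Bs. i \<in> B \<and> j \<in> B} = {B. B \<subseteq> {..<n} \<and> card B = b \<and> i \<in> B \<and> j \<in> B}" by auto
    finally show "(\<Sum>B\<in>?Bs. if i \<in> B \<and> j \<in> B then h i j else 0) = real (card {B. B \<subseteq> {..<n} \<and> card B = b \<and> i \<in> B \<and> j \<in> B}) * h i j"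
      by simp
  qed
  finally show ?thesis .
qed

lemma finite_batch_space: "finite (batch_space n b S m)"
  unfolding batch_space_def using finite_batches by (intro finite_PiE) auto

lemma batch_space_nonempty:
  assumes "b \<le> n"
  shows "batch_space n b S m \<noteq> {}"
proof -
  have "batches n b \<noteq> {}" using card_batches[of n b] assms by (metis card.empty zero_less_binomial_iff less_irrefl)
  then show ?thesis unfolding batch_space_def by (simp add: PiE_eq_empty_iff)
qed

lemma batch_count_difference:
  assumes n: "2 \<le> n" and b1: "1 \<le> b"
  shows "real ((n - 1) choose (b - 1)) - real (pair_batch_count n b)
       = real (n choose b) * (real b * (real n - real b) / (real n * (real n - 1)))"
proof -
  define c1 where "c1 = (n - 1) choose (b - 1)"
  define c2 where "c2 = pair_batch_count n b"
  define N where "N = n choose b"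
  have "Suc (n - 1) * c1 = (Suc (n - 1) choose Suc (b - 1)) * Suc (b - 1)"
    unfolding c1_def by (rule Suc_times_binomial_eq)
  moreover have "Suc (n - 1) = n" "Suc (b - 1) = b" using n b1 by auto
  ultimately have "n * c1 = N * b" unfolding N_def by simp
  then have id1: "real n * real c1 = real b * real N" by (metis of_nat_mult mult.commute)
  have id2: "(real n - 1) * real c2 = (real b - 1) * real c1"
  proof (cases "b \<ge> 2")
    case True
    have "Suc (n - 2) * ((n - 2) choose (b - 2)) = (Suc (n - 2) choose Suc (b - 2)) * Suc (b - 2)"
      by (rule Suc_times_binomial_eq)
    moreover have "Suc (n - 2) = n - 1" "Suc (b - 2) = b - 1" using n True by auto
    ultimately have "real ((n - 1) * c2) = real (c1 * (b - 1))"
      unfolding c1_def c2_def pair_batch_count_def using True by simp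
    then show ?thesis using n True by (simp add: of_nat_diff mult.commute)
  next
    case False
    then show ?thesis using b1 unfolding c2_def pair_batch_count_def by simp
  qed
  have n0: "real n > 0" and n1: "real n - 1 > 0" using n by auto
  have c1: "real c1 = real b * real N / real n" using id1 n0 by (simp add: field_simps)
  have c2: "real c2 = (real b - 1) * real c1 / (real n - 1)" using id2 n1 by (simp add: field_simps)
  show ?thesis
    unfolding c1_def[symmetric] c2_def[symmetric] N_def[symmetric] c2 c1 using n0 n1 by (simp add: field_simps)
qed

lemma sum_batches_sum_centered:
  fixes Y :: "nat \<Rightarrow> 'a::real_vector"
  assumes Y: "(\<Sum>i<n. Y i) = 0" and b1: "1 \<le> b"
  shows "(\<Sum>B\<in>batches n b. \<Sum>i\<in>B. Y i) = 0"
proof -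
  have "(\<Sum>B\<in>batches n b. \<Sum>i\<in>B. Y i) = (\<Sum>i<n. real ((n - 1) choose (b - 1)) *\<^sub>R Y i)"
    unfolding sum_batches_sum using card_batches_containing b1 by (intro sum.cong) auto
  also have "\<dots> = 0" using Y by (simp add: scaleR_sum_right[symmetric])
  finally show ?thesis .
qed

lemma sum_batches_norm_sum_centered:
  fixes Y :: "nat \<Rightarrow> 'a::real_inner"
  assumes Y: "(\<Sum>i<n. Y i) = 0" and b1: "1 \<le> b"
  shows "(\<Sum>B\<in>batches n b. (norm (\<Sum>i\<in>B. Y i))\<^sup>2)
       = (real ((n - 1) choose (b - 1)) - real (pair_batch_count n b)) * (\<Sum>i<n. (norm (Y i))\<^sup>2)"
proof -
  define c1 where "c1 = real ((n - 1) choose (b - 1))"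
  define c2 where "c2 = real (pair_batch_count n b)"
  have "(\<Sum>B\<in>batches n b. (norm (\<Sum>i\<in>B. Y i))\<^sup>2) = (\<Sum>B\<in>batches n b. \<Sum>i\<in>B. \<Sum>j\<in>B. Y i \<bullet> Y j)"
    unfolding power2_norm_eq_inner inner_sum_left inner_sum_right by (intro sum.cong refl sum.swap)
  also have "\<dots> = (\<Sum>i<n. \<Sum>j<n. (c2 + (if j = i then c1 - c2 else 0)) * (Y i \<bullet> Y j))"
    unfolding sum_batches_double_sum
  proof (intro sum.cong refl)
    fix i j assume i: "i \<in> {..<n}" and j: "j \<in> {..<n}"
    show "real (card {B. B \<subseteq> {..<n} \<and> card B = b \<and> i \<in> B \<and> j \<in> B}) * (Y i \<bullet> Y j)
         = (c2 + (if j = i then c1 - c2 else 0)) * (Y i \<bullet> Y j)"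
      using card_batches_containing[of i n b] card_batches_containing_pair[of i n j b] i j b1
      unfolding c1_def c2_def pair_batch_count_def by (cases "j = i") auto
  qed
  also have "\<dots> = (\<Sum>i<n. c2 * (Y i \<bullet> (\<Sum>j<n. Y j)) + (c1 - c2) * (Y i \<bullet> Y i))"
  proof (rule sum.cong[OF refl])
    fix i assume i: "i \<in> {..<n}"
    have "(\<Sum>j<n. (c2 + (if j = i then c1 - c2 else 0)) * (Y i \<bullet> Y j))
        = (\<Sum>j<n. c2 * (Y i \<bullet> Y j) + (if j = i then (c1 - c2) * (Y i \<bullet> Y j) else 0))"
      by (intro sum.cong refl) (auto simp: algebra_simps)
    also have "\<dots> = c2 * (Y i \<bullet> (\<Sum>j<n. Y j)) + (c1 - c2) * (Y i \<bullet> Y i)"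
      using i by (simp add: sum.distrib sum_distrib_left inner_sum_right sum.delta)
    finally show "(\<Sum>j<n. (c2 + (if j = i then c1 - c2 else 0)) * (Y i \<bullet> Y j))
        = c2 * (Y i \<bullet> (\<Sum>j<n. Y j)) + (c1 - c2) * (Y i \<bullet> Y i)" .
  qed
  also have "\<dots> = (c1 - c2) * (\<Sum>i<n. (norm (Y i))\<^sup>2)"
    using Y by (simp add: sum_distrib_left power2_norm_eq_inner)
  finally show ?thesis unfolding c1_def c2_def .
qed

lemma sum_norm_centered_le:
  fixes D :: "nat \<Rightarrow> 'a::real_inner"
  assumes n: "n > 0"
  shows "(\<Sum>i<n. (norm (D i - (1 / real n) *\<^sub>R (\<Sum>j<n. D j)))\<^sup>2) \<le> (\<Sum>i<n. (norm (D i))\<^sup>2)"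
proof -
  define mu where "mu = (1 / real n) *\<^sub>R (\<Sum>j<n. D j)"
  have "(\<Sum>i<n. (norm (D i - mu))\<^sup>2) = (\<Sum>i<n. (norm (D i))\<^sup>2 - 2 * (D i \<bullet> mu) + (norm mu)\<^sup>2)"
    by (intro sum.cong refl) (simp add: power2_norm_eq_inner inner_diff_left inner_diff_right inner_commute)
  also have "\<dots> = (\<Sum>i<n. (norm (D i))\<^sup>2) - 2 * ((\<Sum>i<n. D i) \<bullet> mu) + real n * (norm mu)\<^sup>2"
    by (simp add: sum.distrib sum_subtractf sum_distrib_left inner_sum_left)
  also have "(\<Sum>i<n. D i) = real n *\<^sub>R mu" unfolding mu_def using n by simp
  finally have "(\<Sum>i<n. (norm (D i - mu))\<^sup>2) = (\<Sum>i<n. (norm (D i))\<^sup>2) - real n * (norm mu)\<^sup>2"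
    by (simp add: power2_norm_eq_inner)
  then show ?thesis unfolding mu_def[symmetric] by simp
qed

text \<open>The factor \<open>(n - b) / (n - 1)\<close> is what sampling without replacement gains over
  sampling with replacement.\<close>

lemma batch_mean_variance_bound:
  fixes e :: "'a::real_inner" and D :: "nat \<Rightarrow> 'a"
  assumes n: "n \<ge> 2" and b1: "1 \<le> b" and bn: "b \<le> n"
  shows "(\<Sum>B\<in>batches n b. (norm (e + (1 / real b) *\<^sub>R (\<Sum>i\<in>B. D i) - (1 / real n) *\<^sub>R (\<Sum>i<n. D i)))\<^sup>2)
            / real (card (batches n b))
         \<le> (norm e)\<^sup>2 + (real n - real b) / (real b * (real n - 1)) * ((\<Sum>i<n. (norm (D i))\<^sup>2) / real n)"
proof -
  define mu where "mu = (1 / real n) *\<^sub>R (\<Sum>i<n. D i)"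
  define Y where "Y i = D i - mu" for i
  define N where "N = real (n choose b)"
  define Q where "Q = (\<Sum>i<n. (norm (Y i))\<^sup>2)"
  have N0: "N > 0" unfolding N_def using bn by simp
  have sumY: "(\<Sum>i<n. Y i) = 0"
    unfolding Y_def mu_def using n by (simp add: sum_subtractf sum_constant_scaleR)
  have expand: "(norm (e + (1 / real b) *\<^sub>R (\<Sum>i\<in>B. D i) - mu))\<^sup>2
      = (norm e)\<^sup>2 + 2 * (1 / real b) * (e \<bullet> (\<Sum>i\<in>B. Y i)) + (1 / real b)\<^sup>2 * (norm (\<Sum>i\<in>B. Y i))\<^sup>2"
    if "B \<in> batches n b" for B
  proof -
    have "(\<Sum>i\<in>B. Y i) = (\<Sum>i\<in>B. D i) - real b *\<^sub>R mu"
      using that unfolding Y_def by (simp add: sum_subtractf sum_constant_scaleR)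
    then have "(1 / real b) *\<^sub>R (\<Sum>i\<in>B. D i) - mu = (1 / real b) *\<^sub>R (\<Sum>i\<in>B. Y i)"
      using b1 by (simp add: scaleR_diff_right)
    then have "e + (1 / real b) *\<^sub>R (\<Sum>i\<in>B. D i) - mu = e + (1 / real b) *\<^sub>R (\<Sum>i\<in>B. Y i)"
      by (simp add: algebra_simps)
    then show ?thesis by (simp only: norm_add_scaleR_power2)
  qed
  have "(\<Sum>B\<in>batches n b. (norm (e + (1 / real b) *\<^sub>R (\<Sum>i\<in>B. D i) - mu))\<^sup>2)
      = N * (norm e)\<^sup>2 + 2 * (1 / real b) * (e \<bullet> (\<Sum>B\<in>batches n b. \<Sum>i\<in>B. Y i))
        + (1 / real b)\<^sup>2 * (\<Sum>B\<in>batches n b. (norm (\<Sum>i\<in>B. Y i))\<^sup>2)"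
    using expand card_batches[of n b]
    by (simp add: sum.distrib sum_distrib_left inner_sum_right N_def)
  also have "\<dots> = N * (norm e)\<^sup>2 + (1 / real b)\<^sup>2 * (N * (real b * (real n - real b) / (real n * (real n - 1)))) * Q"
    unfolding sum_batches_sum_centered[OF sumY b1] sum_batches_norm_sum_centered[OF sumY b1]
      batch_count_difference[OF n b1] N_def Q_def by simp
  also have "\<dots> = N * ((norm e)\<^sup>2 + (real n - real b) / (real b * (real n - 1)) * (Q / real n))"
    using b1 n by (simp add: field_simps power2_eq_square)
  finally have "(\<Sum>B\<in>batches n b. (norm (e + (1 / real b) *\<^sub>R (\<Sum>i\<in>B. D i) - mu))\<^sup>2) / N
      = (norm e)\<^sup>2 + (real n - real b) / (real b * (real n - 1)) * (Q / real n)"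
    using N0 by simp
  moreover have "Q \<le> (\<Sum>i<n. (norm (D i))\<^sup>2)"
    unfolding Q_def Y_def mu_def using n by (intro sum_norm_centered_le) simp
  ultimately show ?thesis
    using bn n unfolding mu_def N_def card_batches
    by (simp add: divide_right_mono mult_left_mono)
qed

section \<open>Uniform averages\<close>

lemma sum_PiE_resample_coordinate:
  fixes g :: "('i \<Rightarrow> 'b) \<Rightarrow> real"
  assumes fI: "finite I" and fF: "\<And>i. i \<in> I \<Longrightarrow> finite (F i)" and k: "k \<in> I"
  shows "(\<Sum>\<beta>\<in>PiE I F. g \<beta>) = (\<Sum>\<beta>\<in>PiE I F. (\<Sum>B\<in>F k. g (\<beta>(k := B))) / real (card (F k)))"
proof (cases "F k = {}")
  case True
  then have "PiE I F = {}" using k by (auto simp: PiE_eq_empty_iff)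
  then show ?thesis by simp
next
  case False
  define I' where "I' = I - {k}"
  have II: "I = insert k I'" and kI': "k \<notin> I'" unfolding I'_def using k by auto
  define c where "c = real (card (F k))"
  have c0: "c > 0" unfolding c_def using False fF[OF k] by (simp add: card_gt_0_iff)
  have fk: "finite (F k)" using fF k by simp
  have fP: "finite (PiE I' F)" using fI fF unfolding I'_def by (intro finite_PiE) auto
  have re: "(\<Sum>\<beta>\<in>PiE I F. G \<beta>) = (\<Sum>y\<in>F k. \<Sum>h\<in>PiE I' F. G (h(k := y)))" for G :: "('i \<Rightarrow> 'b) \<Rightarrow> real"
  proof -
    have "(\<Sum>\<beta>\<in>PiE I F. G \<beta>) = (\<Sum>\<beta>\<in>(\<lambda>(y, h). h(k := y)) ` (F k \<times> PiE I' F). G \<beta>)"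
      unfolding II PiE_insert_eq ..
    also have "\<dots> = (\<Sum>p\<in>F k \<times> PiE I' F. G ((\<lambda>(y, h). h(k := y)) p))"
      by (rule sum.reindex[unfolded comp_def]) (rule inj_combinator[OF kI'])
    also have "\<dots> = (\<Sum>p\<in>F k \<times> PiE I' F. (\<lambda>y h. G (h(k := y))) (fst p) (snd p))"
      by (intro sum.cong refl) (auto simp: split_beta)
    also have "\<dots> = (\<Sum>y\<in>F k. \<Sum>h\<in>PiE I' F. G (h(k := y)))"
      by (simp add: sum.cartesian_product')
    finally show ?thesis .
  qed
  have "(\<Sum>\<beta>\<in>PiE I F. (\<Sum>B\<in>F k. g (\<beta>(k := B))) / c)
      = (\<Sum>y\<in>F k. \<Sum>h\<in>PiE I' F. (\<Sum>B\<in>F k. g (h(k := B))) / c)"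
    unfolding re by simp
  also have "\<dots> = c * (\<Sum>h\<in>PiE I' F. (\<Sum>B\<in>F k. g (h(k := B))) / c)"
    by (simp add: c_def)
  also have "\<dots> = (\<Sum>h\<in>PiE I' F. \<Sum>B\<in>F k. g (h(k := B)))"
    using c0 by (simp add: sum_divide_distrib[symmetric])
  also have "\<dots> = (\<Sum>B\<in>F k. \<Sum>h\<in>PiE I' F. g (h(k := B)))" by (rule sum.swap)
  also have "\<dots> = (\<Sum>\<beta>\<in>PiE I F. g \<beta>)" unfolding re ..
  finally show ?thesis unfolding c_def by simp
qed

lemma pair_pmf_of_set:
  assumes "finite A" "A \<noteq> {}" "finite B" "B \<noteq> {}"
  shows "pair_pmf (pmf_of_set A) (pmf_of_set B) = pmf_of_set (A \<times> B)"
proof (rule pmf_eqI)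
  fix x :: "'a \<times> 'b"
  obtain a b where x: "x = (a, b)" by force
  have "A \<times> B \<noteq> {}" "finite (A \<times> B)" using assms by auto
  then show "pmf (pair_pmf (pmf_of_set A) (pmf_of_set B)) x = pmf (pmf_of_set (A \<times> B)) x"
    using assms unfolding x by (simp add: pmf_pair indicator_def card_cartesian_product)
qed

lemma expectation_pair_pmf_of_set:
  fixes h :: "'a \<times> 'b \<Rightarrow> real"
  assumes "finite A" "A \<noteq> {}" "finite B" "B \<noteq> {}"
  shows "measure_pmf.expectation (pair_pmf (pmf_of_set A) (pmf_of_set B)) h
       = (1 / real (card B)) * (\<Sum>y\<in>B. measure_pmf.expectation (pmf_of_set A) (\<lambda>x. h (x, y)))"
proof -
  have ne: "A \<times> B \<noteq> {}" "finite (A \<times> B)" using assms by auto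
  have "measure_pmf.expectation (pair_pmf (pmf_of_set A) (pmf_of_set B)) h = (\<Sum>p\<in>A \<times> B. h p) / real (card (A \<times> B))"
    unfolding pair_pmf_of_set[OF assms] by (rule integral_pmf_of_set[OF ne])
  also have "(\<Sum>p\<in>A \<times> B. h p) = (\<Sum>x\<in>A. \<Sum>y\<in>B. h (x, y))" by (simp add: sum.cartesian_product)
  also have "\<dots> = (\<Sum>y\<in>B. \<Sum>x\<in>A. h (x, y))" by (rule sum.swap)
  finally show ?thesis using assms
    by (simp add: integral_pmf_of_set card_cartesian_product sum_divide_distrib field_simps)
qed

lemma expectation_uniform_epoch_index:
  fixes h :: "'b \<Rightarrow> nat \<Rightarrow> nat \<Rightarrow> real"
  assumes A: "finite A" "A \<noteq> {}" and S1: "S \<ge> 1"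
  shows "measure_pmf.expectation (pair_pmf (pmf_of_set A) (pmf_of_set ({1..S} \<times> {0..m})))
           (\<lambda>(x, (s, t)). h x s t)
       = 1 / (real (m + 1) * real S) *
         (\<Sum>s\<in>{1..S}. \<Sum>t\<in>{0..m}. measure_pmf.expectation (pmf_of_set A) (\<lambda>x. h x s t))"
proof -
  have "{1..S} \<times> {0..m} \<noteq> {}" using S1 by auto
  then show ?thesis
    using expectation_pair_pmf_of_set[OF A, of "{1..S} \<times> {0..m}" "\<lambda>(x, (s, t)). h x s t"]
    by (simp add: sum.cartesian_product split_beta card_cartesian_product algebra_simps)
qed

lemma sarah_inner_cong_batches:
  "(\<And>j. 1 \<le> j \<Longrightarrow> j \<le> t \<Longrightarrow> B j = B' j) \<Longrightarrow>
   sarah_inner D psi n gf b eta gam B w t = sarah_inner D psi n gf b eta gam B' w t"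
proof (induction t)
  case 0 then show ?case by simp
next
  case (Suc t)
  then have IH: "sarah_inner D psi n gf b eta gam B w t = sarah_inner D psi n gf b eta gam B' w t" by simp
  have "B (Suc t) = B' (Suc t)" using Suc.prems by simp
  then show ?case using IH by (simp add: split_def Let_def)
qed

lemma sarah_inner_Suc_fst_cong_batches:
  "(\<And>j. 1 \<le> j \<Longrightarrow> j \<le> t \<Longrightarrow> B j = B' j) \<Longrightarrow>
   fst (sarah_inner D psi n gf b eta gam B w (Suc t)) = fst (sarah_inner D psi n gf b eta gam B' w (Suc t))"
  using sarah_inner_cong_batches[of t B B' D psi n gf b eta gam w] by (simp add: split_def Let_def)

lemma sarah_snap_cong_batches:
  "(\<And>s' j. 1 \<le> s' \<Longrightarrow> s' \<le> s \<Longrightarrow> 1 \<le> j \<Longrightarrow> j \<le> m \<Longrightarrow> beta (s', j) = beta' (s', j)) \<Longrightarrow>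
   sarah_snap D psi n gf b eta gam m beta w0 s = sarah_snap D psi n gf b eta gam m beta' w0 s"
proof (induction s)
  case 0 then show ?case by simp
next
  case (Suc s)
  then have IH: "sarah_snap D psi n gf b eta gam m beta w0 s = sarah_snap D psi n gf b eta gam m beta' w0 s" by simp
  show ?case using sarah_inner_Suc_fst_cong_batches[of m "\<lambda>t. beta (Suc s, t)" "\<lambda>t. beta' (Suc s, t)"] Suc.prems IH by simp
qed

section \<open>Analysis of one run\<close>

lemma accumulated_error_bound:
  fixes A Q :: "nat \<Rightarrow> real" and K :: real
  assumes A0: "\<And>t. A t \<ge> 0" and Q0: "Q 0 = 0" and K0: "K \<ge> 0"
    and Qs: "\<And>t. t < m \<Longrightarrow> Q (Suc t) \<le> Q t + K * A t"
  shows "(\<Sum>t<Suc m. Q t) \<le> K * real m * (\<Sum>t<Suc m. A t)"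
proof -
  have Qt: "Q t \<le> K * (\<Sum>j<t. A j)" if "t \<le> m" for t
    using that
  proof (induction t)
    case (Suc t)
    then have "Q (Suc t) \<le> Q t + K * A t" using Qs by simp
    also have "\<dots> \<le> K * (\<Sum>j<t. A j) + K * A t" using Suc by simp
    finally show ?case by (simp add: algebra_simps)
  qed (simp add: Q0)
  have "Q (Suc t) \<le> K * (\<Sum>t<Suc m. A t)" if "t < m" for t
  proof -
    have "Q (Suc t) \<le> K * (\<Sum>j<Suc t. A j)" using Qt[of "Suc t"] that by simp
    also have "\<dots> \<le> K * (\<Sum>t<Suc m. A t)"
      using that A0 K0 by (intro mult_left_mono sum_mono2) auto
    finally show ?thesis .
  qed
  then have "Q 0 + (\<Sum>t<m. Q (Suc t)) \<le> 0 + (\<Sum>t<m. K * (\<Sum>t<Suc m. A t))"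
    using Q0 by (intro add_mono sum_mono) auto
  then show ?thesis unfolding sum.lessThan_Suc_shift[of Q m] by (simp add: mult_ac)
qed

text \<open>One epoch in abstract form: \<open>A t\<close> is the squared length of the proximal step,
  \<open>Q t\<close> the squared error of the gradient estimator, \<open>F t\<close> the objective value and \<open>G t\<close> the
  squared norm of the gradient mapping at the \<open>t\<close>-th iterate.\<close>

lemma epoch_recursion_bound:
  fixes A Q G F :: "nat \<Rightarrow> real" and gam eta K :: real and m :: nat
  assumes A0: "\<And>t. A t \<ge> 0" and Qn: "\<And>t. Q t \<ge> 0" and Q0: "Q 0 = 0"
    and Qs: "\<And>t. t < m \<Longrightarrow> Q (Suc t) \<le> Q t + K * A t"
    and Fs: "\<And>t. F (Suc t) \<le> F t + gam / 2 * Q t - gam * (3 / 2) * A t"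
    and Gs: "\<And>t. eta\<^sup>2 * G t \<le> 2 * A t + 2 * eta\<^sup>2 * Q t"
    and g0: "gam > 0" and K0: "K \<ge> 0" and Km: "K * real m \<le> 2 / 3" and e2: "eta\<^sup>2 \<le> 1 / 4"
  shows "gam * eta\<^sup>2 / 2 * (\<Sum>t<Suc m. G t) \<le> F 0 - F (Suc m)"
proof -
  define AS where "AS = (\<Sum>t<Suc m. A t)"
  define QS where "QS = (\<Sum>t<Suc m. Q t)"
  define GS where "GS = (\<Sum>t<Suc m. G t)"
  have AS0: "AS \<ge> 0" unfolding AS_def using A0 by (simp add: sum_nonneg)
  have QS0: "QS \<ge> 0" unfolding QS_def using Qn by (simp add: sum_nonneg)
  have "QS \<le> K * real m * AS"
    unfolding QS_def AS_def by (rule accumulated_error_bound[OF A0 Q0 K0 Qs])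
  also have "\<dots> \<le> 2 / 3 * AS" using Km AS0 by (intro mult_right_mono) auto
  finally have QSb: "QS \<le> 2 / 3 * AS" .
  have "F (Suc m) - F 0 = (\<Sum>t<Suc m. F (Suc t) - F t)" by (rule sum_lessThan_telescope[symmetric])
  also have "\<dots> \<le> (\<Sum>t<Suc m. gam / 2 * Q t - gam * (3 / 2) * A t)"
  proof (rule sum_mono)
    show "F (Suc t) - F t \<le> gam / 2 * Q t - gam * (3 / 2) * A t" for t using Fs[of t] by linarith
  qed
  also have "\<dots> = gam / 2 * QS - gam * (3 / 2) * AS"
    unfolding QS_def AS_def sum_subtractf sum_distrib_left[symmetric] by simp
  finally have Ftel: "gam * (3 / 2) * AS - gam / 2 * QS \<le> F 0 - F (Suc m)" by simp
  have "eta\<^sup>2 * GS \<le> (\<Sum>t<Suc m. 2 * A t + 2 * eta\<^sup>2 * Q t)"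
    unfolding GS_def sum_distrib_left using Gs by (intro sum_mono) auto
  also have "\<dots> = 2 * AS + 2 * eta\<^sup>2 * QS"
    unfolding AS_def QS_def sum.distrib sum_distrib_left[symmetric] ..
  finally have GSb: "eta\<^sup>2 * GS \<le> 2 * AS + 2 * eta\<^sup>2 * QS" .
  have "(eta\<^sup>2 + 1 / 2) * QS \<le> 3 / 4 * QS" using e2 QS0 by (intro mult_right_mono) auto
  also have "\<dots> \<le> 3 / 4 * (2 / 3 * AS)" using QSb by simp
  finally have key: "(eta\<^sup>2 + 1 / 2) * QS \<le> AS / 2" by simp
  have "gam * eta\<^sup>2 / 2 * GS \<le> gam / 2 * (2 * AS + 2 * eta\<^sup>2 * QS)"
    using mult_left_mono[OF GSb, of "gam / 2"] g0 by simp
  also have "\<dots> = gam * (AS + (eta\<^sup>2 + 1 / 2) * QS) - gam / 2 * QS" by (simp add: algebra_simps)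
  also have "\<dots> \<le> gam * (3 / 2) * AS - gam / 2 * QS" using key g0 by (simp add: mult_left_mono)
  also have "\<dots> \<le> F 0 - F (Suc m)" by (rule Ftel)
  finally show ?thesis unfolding GS_def .
qed

locale prox_sarah =
  fixes f :: "nat \<Rightarrow> 'a::euclidean_space \<Rightarrow> real" and gf :: "nat \<Rightarrow> 'a \<Rightarrow> 'a"
    and psi :: "'a \<Rightarrow> real" and D :: "'a set"
    and n b S m :: nat and L gam eta :: real and w0 :: 'a
  assumes n2: "n \<ge> 2"
    and grad: "\<forall>i<n. \<forall>x. (f i has_derivative (\<lambda>h. gf i x \<bullet> h)) (at x)"
    and dom_ne: "D \<noteq> {}" and psi_cvx: "convex_on D psi"
    and psi_closed: "closed {(x, t). x \<in> D \<and> psi x \<le> t}"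
    and A2: "\<forall>w w'. (\<Sum>i<n. (norm (gf i w - gf i w'))\<^sup>2) / real n \<le> L\<^sup>2 * (norm (w - w'))\<^sup>2"
    and L_nonneg: "L \<ge> 0" and b1: "1 \<le> b" and bn: "b \<le> n"
    and gam_pos: "0 < gam" and gam_le1: "gam \<le> 1" and eta_pos: "0 < eta"
    and eta_gam: "2 \<le> 1 / eta - L * gam / 2"
    and batch_variance: "(real n - real b) / (real b * (real n - 1)) * L\<^sup>2 * gam\<^sup>2 * real m \<le> 2 / 3"
    and eta_le: "eta\<^sup>2 \<le> 1 / 4" and w0D: "w0 \<in> D"
begin

abbreviation "grad_f \<equiv> fullgrad n gf"

definition "fbar w = (\<Sum>i<n. f i w) / real n"
definition "F w = fbar w + psi w"
definition "rho = (real n - real b) / (real b * (real n - 1))"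
definition "Omega = batch_space n b S m"

definition "snapshot beta s = sarah_snap D psi n gf b (\<lambda>_. eta) (\<lambda>_. gam) m beta w0 s"
definition "state beta s t =
  sarah_inner D psi n gf b (\<lambda>_. eta) (\<lambda>_. gam) (\<lambda>t. beta (s, t)) (snapshot beta (s - 1)) t"
definition "iterate beta s t = fst (state beta s t)"
definition "estimator beta s t = snd (state beta s t)"
definition "step beta s t = prox D psi eta (iterate beta s t - eta *\<^sub>R estimator beta s t) - iterate beta s t"
definition "error beta s t = estimator beta s t - grad_f (iterate beta s t)"

lemma sarah_iter_eq_iterate:
  "sarah_iter D psi n gf b (\<lambda>_. eta) (\<lambda>_. gam) m beta w0 s t = iterate beta s t"
  unfolding sarah_iter_def iterate_def state_def snapshot_def ..

lemma prox_in_D: "prox D psi eta u \<in> D"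
  and prox_variational_ineq:
    "y \<in> D \<Longrightarrow> (u - prox D psi eta u) \<bullet> (y - prox D psi eta u) \<le> eta * (psi y - psi (prox D psi eta u))"
  using prox_characterization[OF psi_closed psi_cvx dom_ne eta_pos, of u] by auto

lemma convex_combination_prox_in_D: "w \<in> D \<Longrightarrow> (1 - gam) *\<^sub>R w + gam *\<^sub>R prox D psi eta u \<in> D"
  using psi_cvx prox_in_D gam_pos gam_le1 unfolding convex_on_def convex_def by auto

lemma sarah_inner_in_D: "w \<in> D \<Longrightarrow> fst (sarah_inner D psi n gf b (\<lambda>_. eta) (\<lambda>_. gam) B w t) \<in> D"
  by (induction t) (auto simp: split_def Let_def convex_combination_prox_in_D)

lemma snapshot_in_D: "snapshot beta s \<in> D"
  unfolding snapshot_def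
proof (induction s)
  case (Suc s)
  then show ?case unfolding sarah_snap.simps by (rule sarah_inner_in_D)
qed (simp add: w0D)

lemma iterate_in_D: "iterate beta s t \<in> D"
  unfolding iterate_def state_def using sarah_inner_in_D snapshot_in_D unfolding snapshot_def by blast

lemma snapshot_Suc: "snapshot beta (Suc s) = iterate beta (Suc s) (Suc m)"
  unfolding snapshot_def iterate_def state_def by simp

lemma iterate_0: "iterate beta s 0 = snapshot beta (s - 1)"
  unfolding iterate_def state_def by simp

lemma error_0: "error beta s 0 = 0"
  unfolding error_def estimator_def iterate_def state_def by simp

lemma iterate_Suc: "iterate beta s (Suc t) = iterate beta s t + gam *\<^sub>R step beta s t"
  unfolding iterate_def step_def estimator_def state_def by (simp add: split_def Let_def algebra_simps)

lemma estimator_Suc: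
  "estimator beta s (Suc t) = estimator beta s t
     + (1 / real b) *\<^sub>R (\<Sum>i\<in>beta (s, Suc t). gf i (iterate beta s (Suc t)) - gf i (iterate beta s t))"
  unfolding estimator_def iterate_def state_def by (simp add: split_def Let_def)

lemma finite_Omega: "finite Omega" and Omega_nonempty: "Omega \<noteq> {}"
  unfolding Omega_def using finite_batch_space batch_space_nonempty[OF bn] by simp_all

lemma fbar_descent: "fbar y \<le> fbar x + grad_f x \<bullet> (y - x) + L / 2 * (norm (y - x))\<^sup>2"
proof (rule descent_lemma)
  show "(fbar has_derivative (\<lambda>h. grad_f x \<bullet> h)) (at x)" for x
    using has_derivative_average[OF grad] unfolding fbar_def[abs_def] .
  show "norm (grad_f x - grad_f y) \<le> L * norm (x - y)" for x y
    by (rule fullgrad_lipschitz) (use n2 A2 L_nonneg in auto)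
qed

lemma F_step_decrease:
  fixes w v :: 'a
  assumes wD: "w \<in> D"
  defines "d \<equiv> prox D psi eta (w - eta *\<^sub>R v) - w"
  shows "F (w + gam *\<^sub>R d) \<le> F w + gam / 2 * (norm (v - grad_f w))\<^sup>2 - gam * (3 / 2) * (norm d)\<^sup>2"
proof -
  define p where "p = prox D psi eta (w - eta *\<^sub>R v)"
  define e where "e = v - grad_f w"
  define w' where "w' = w + gam *\<^sub>R d"
  have d: "d = p - w" unfolding d_def p_def ..
  have pD: "p \<in> D" unfolding p_def by (rule prox_in_D)
  have desc: "fbar w' \<le> fbar w + gam * (grad_f w \<bullet> d) + L / 2 * gam\<^sup>2 * (norm d)\<^sup>2"
    using fbar_descent[of w' w] gam_pos unfolding w'_def by (simp add: power_mult_distrib)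
  have "w' = (1 - gam) *\<^sub>R w + gam *\<^sub>R p" unfolding w'_def d by (simp add: algebra_simps)
  then have psiw': "psi w' \<le> (1 - gam) * psi w + gam * psi p"
    using convex_onD[OF psi_cvx, of gam w p] gam_pos gam_le1 wD pD by simp
  have "(w - eta *\<^sub>R v - p) \<bullet> (w - p) \<le> eta * (psi w - psi p)"
    unfolding p_def by (rule prox_variational_ineq[OF wD])
  moreover have "(w - eta *\<^sub>R v - p) \<bullet> (w - p) = (norm d)\<^sup>2 + eta * (v \<bullet> d)"
    unfolding d by (simp add: power2_norm_eq_inner inner_diff_left inner_diff_right inner_commute algebra_simps)
  ultimately have "eta * psi p \<le> eta * psi w - (norm d)\<^sup>2 - eta * (v \<bullet> d)" by (simp add: algebra_simps)
  then have psip: "psi p \<le> psi w - (norm d)\<^sup>2 / eta - v \<bullet> d" using eta_pos by (simp add: field_simps)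
  have ed: "- (e \<bullet> d) \<le> ((norm e)\<^sup>2 + (norm d)\<^sup>2) / 2"
  proof -
    have "0 \<le> (norm (e + d))\<^sup>2" by simp
    also have "\<dots> = (norm e)\<^sup>2 + 2 * (e \<bullet> d) + (norm d)\<^sup>2"
      by (simp add: power2_norm_eq_inner inner_add_left inner_add_right inner_commute)
    finally show ?thesis by simp
  qed
  have "F w' \<le> fbar w + gam * (grad_f w \<bullet> d) + L / 2 * gam\<^sup>2 * (norm d)\<^sup>2 + ((1 - gam) * psi w + gam * psi p)"
    using desc psiw' unfolding F_def by linarith
  also have "\<dots> \<le> fbar w + gam * (grad_f w \<bullet> d) + L / 2 * gam\<^sup>2 * (norm d)\<^sup>2
      + ((1 - gam) * psi w + gam * (psi w - (norm d)\<^sup>2 / eta - v \<bullet> d))"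
    using psip gam_pos by (simp add: mult_left_mono)
  also have "\<dots> = F w + gam * (- (e \<bullet> d)) - gam * (1 / eta - L * gam / 2) * (norm d)\<^sup>2"
    unfolding F_def e_def by (simp add: inner_diff_left algebra_simps power2_eq_square)
  also have "\<dots> \<le> F w + gam * (((norm e)\<^sup>2 + (norm d)\<^sup>2) / 2) - gam * 2 * (norm d)\<^sup>2"
    using mult_left_mono[OF ed, of gam] mult_right_mono[OF mult_left_mono[OF eta_gam, of gam]]
      gam_pos by (smt (verit) zero_le_power2)
  also have "\<dots> = F w + gam / 2 * (norm e)\<^sup>2 - gam * (3 / 2) * (norm d)\<^sup>2"
    by (simp add: algebra_simps)
  finally show ?thesis unfolding w'_def e_def .
qed

lemma grad_map_step_bound:
  fixes w v :: 'a
  defines "d \<equiv> prox D psi eta (w - eta *\<^sub>R v) - w"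
  shows "eta\<^sup>2 * (norm (grad_map D psi n gf eta w))\<^sup>2 \<le> 2 * (norm d)\<^sup>2 + 2 * eta\<^sup>2 * (norm (v - grad_f w))\<^sup>2"
proof -
  define p where "p = prox D psi eta (w - eta *\<^sub>R v)"
  define p' where "p' = prox D psi eta (w - eta *\<^sub>R grad_f w)"
  have "norm (p - p') \<le> norm ((w - eta *\<^sub>R v) - (w - eta *\<^sub>R grad_f w))"
    unfolding p_def p'_def by (intro variational_ineq_nonexpansive[of _ _ _ eta psi] prox_variational_ineq prox_in_D)
  also have "\<dots> = eta * norm (v - grad_f w)"
    using eta_pos norm_scaleR[of eta "grad_f w - v"] by (simp add: algebra_simps norm_minus_commute)
  finally have "norm (w - p') \<le> norm d + eta * norm (v - grad_f w)"
    using norm_triangle_ineq[of "w - p" "p - p'"] unfolding d_def p_def[symmetric]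
    by (simp add: norm_minus_commute)
  moreover have "eta *\<^sub>R grad_map D psi n gf eta w = w - p'"
    unfolding grad_map_def p'_def using eta_pos by simp
  then have "eta\<^sup>2 * (norm (grad_map D psi n gf eta w))\<^sup>2 = (norm (w - p'))\<^sup>2"
    using eta_pos by (metis abs_of_pos norm_scaleR power_mult_distrib)
  ultimately have "eta\<^sup>2 * (norm (grad_map D psi n gf eta w))\<^sup>2 \<le> (norm d + eta * norm (v - grad_f w))\<^sup>2"
    by (simp add: power_mono)
  also have "\<dots> \<le> 2 * (norm d)\<^sup>2 + 2 * eta\<^sup>2 * (norm (v - grad_f w))\<^sup>2"
    using zero_le_power2[of "norm d - eta * norm (v - grad_f w)"] by (simp add: power2_eq_square algebra_simps)
  finally show ?thesis .
qed

lemma F_iterate_Suc: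
  "F (iterate beta s (Suc t))
     \<le> F (iterate beta s t) + gam / 2 * (norm (error beta s t))\<^sup>2 - gam * (3 / 2) * (norm (step beta s t))\<^sup>2"
  using F_step_decrease[OF iterate_in_D] unfolding iterate_Suc step_def error_def by simp

lemma grad_map_iterate:
  "eta\<^sup>2 * (norm (grad_map D psi n gf eta (iterate beta s t)))\<^sup>2
     \<le> 2 * (norm (step beta s t))\<^sup>2 + 2 * eta\<^sup>2 * (norm (error beta s t))\<^sup>2"
  using grad_map_step_bound unfolding step_def error_def by simp

lemma gradient_change_iterate:
  "(\<Sum>i<n. (norm (gf i (iterate beta s (Suc t)) - gf i (iterate beta s t)))\<^sup>2) / real n
     \<le> L\<^sup>2 * gam\<^sup>2 * (norm (step beta s t))\<^sup>2"
proof -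
  have "(\<Sum>i<n. (norm (gf i (iterate beta s (Suc t)) - gf i (iterate beta s t)))\<^sup>2) / real n
      \<le> L\<^sup>2 * (norm (iterate beta s (Suc t) - iterate beta s t))\<^sup>2"
    using A2 by blast
  also have "(norm (iterate beta s (Suc t) - iterate beta s t))\<^sup>2 = gam\<^sup>2 * (norm (step beta s t))\<^sup>2"
    unfolding iterate_Suc using gam_pos by (simp add: power_mult_distrib)
  finally show ?thesis by (simp add: mult.assoc)
qed

lemma state_fun_upd:
  assumes "1 \<le> s"
  shows "state (beta((s, Suc t) := B)) s t = state beta s t"
proof -
  have "snapshot (beta((s, Suc t) := B)) (s - 1) = snapshot beta (s - 1)"
    unfolding snapshot_def by (rule sarah_snap_cong_batches) (use assms in auto)
  then show ?thesis unfolding state_def by (auto intro: sarah_inner_cong_batches)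
qed

lemma iterate_fun_upd: "1 \<le> s \<Longrightarrow> iterate (beta((s, Suc t) := B)) s t = iterate beta s t"
  and estimator_fun_upd: "1 \<le> s \<Longrightarrow> estimator (beta((s, Suc t) := B)) s t = estimator beta s t"
  unfolding iterate_def estimator_def using state_fun_upd by simp_all

lemma iterate_Suc_fun_upd: "1 \<le> s \<Longrightarrow> iterate (beta((s, Suc t) := B)) s (Suc t) = iterate beta s (Suc t)"
  unfolding iterate_Suc step_def using iterate_fun_upd estimator_fun_upd by simp

text \<open>Redrawing the batch \<open>B\<close> of step \<open>t + 1\<close> leaves the iterates up to \<open>t + 1\<close> unchanged and
  moves the estimator error by a centred mini-batch mean.\<close>

lemma error_Suc_fun_upd:
  assumes s1: "1 \<le> s"
  shows "error (beta((s, Suc t) := B)) s (Suc t) = error beta s t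
     + (1 / real b) *\<^sub>R (\<Sum>i\<in>B. gf i (iterate beta s (Suc t)) - gf i (iterate beta s t))
     - (1 / real n) *\<^sub>R (\<Sum>i<n. gf i (iterate beta s (Suc t)) - gf i (iterate beta s t))"
proof -
  have "grad_f (iterate beta s (Suc t)) - grad_f (iterate beta s t)
      = (1 / real n) *\<^sub>R (\<Sum>i<n. gf i (iterate beta s (Suc t)) - gf i (iterate beta s t))"
    unfolding fullgrad_def by (simp add: sum_subtractf scaleR_diff_right)
  then show ?thesis
    unfolding error_def estimator_Suc
    using iterate_fun_upd[OF s1] estimator_fun_upd[OF s1] iterate_Suc_fun_upd[OF s1]
    by (simp add: algebra_simps)
qed

lemma rho_nonneg: "rho \<ge> 0"
  unfolding rho_def using bn b1 n2 by simp

lemma error_Suc_sum_bound: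
  assumes s: "s \<in> {1..S}" and t: "t < m"
  shows "(\<Sum>beta\<in>Omega. (norm (error beta s (Suc t)))\<^sup>2)
      \<le> (\<Sum>beta\<in>Omega. (norm (error beta s t))\<^sup>2 + rho * L\<^sup>2 * gam\<^sup>2 * (norm (step beta s t))\<^sup>2)"
proof -
  have st: "(s, Suc t) \<in> {1..S} \<times> {1..m}" using s t by auto
  have "(\<Sum>beta\<in>Omega. (norm (error beta s (Suc t)))\<^sup>2)
      = (\<Sum>beta\<in>Omega. (\<Sum>B\<in>batches n b. (norm (error (beta((s, Suc t) := B)) s (Suc t)))\<^sup>2)
          / real (card (batches n b)))"
    unfolding Omega_def batch_space_def
    by (rule sum_PiE_resample_coordinate[OF _ _ st]) (auto simp: finite_batches)
  also have "\<dots> \<le> (\<Sum>beta\<in>Omega. (norm (error beta s t))\<^sup>2 + rho * L\<^sup>2 * gam\<^sup>2 * (norm (step beta s t))\<^sup>2)"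
  proof (rule sum_mono)
    fix beta
    have s1: "1 \<le> s" using s by simp
    define Dl where "Dl i = gf i (iterate beta s (Suc t)) - gf i (iterate beta s t)" for i
    have "(\<Sum>B\<in>batches n b. (norm (error (beta((s, Suc t) := B)) s (Suc t)))\<^sup>2) / real (card (batches n b))
       = (\<Sum>B\<in>batches n b. (norm (error beta s t + (1 / real b) *\<^sub>R (\<Sum>i\<in>B. Dl i)
           - (1 / real n) *\<^sub>R (\<Sum>i<n. Dl i)))\<^sup>2) / real (card (batches n b))"
      unfolding error_Suc_fun_upd[OF s1] Dl_def ..
    also have "\<dots> \<le> (norm (error beta s t))\<^sup>2 + rho * ((\<Sum>i<n. (norm (Dl i))\<^sup>2) / real n)"
      unfolding rho_def by (rule batch_mean_variance_bound) (use n2 b1 bn in auto)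
    also have "\<dots> \<le> (norm (error beta s t))\<^sup>2 + rho * (L\<^sup>2 * gam\<^sup>2 * (norm (step beta s t))\<^sup>2)"
      using gradient_change_iterate rho_nonneg unfolding Dl_def by (intro add_left_mono mult_left_mono)
    finally show "(\<Sum>B\<in>batches n b. (norm (error (beta((s, Suc t) := B)) s (Suc t)))\<^sup>2)
        / real (card (batches n b))
        \<le> (norm (error beta s t))\<^sup>2 + rho * L\<^sup>2 * gam\<^sup>2 * (norm (step beta s t))\<^sup>2"
      by (simp add: mult.assoc)
  qed
  finally show ?thesis .
qed

lemma epoch_bound:
  assumes s: "s \<in> {1..S}"
  shows "gam * eta\<^sup>2 / 2 * (\<Sum>t<Suc m. \<Sum>beta\<in>Omega. (norm (grad_map D psi n gf eta (iterate beta s t)))\<^sup>2)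
     \<le> (\<Sum>beta\<in>Omega. F (snapshot beta (s - 1))) - (\<Sum>beta\<in>Omega. F (snapshot beta s))"
proof -
  define A where "A t = (\<Sum>beta\<in>Omega. (norm (step beta s t))\<^sup>2)" for t
  define Q where "Q t = (\<Sum>beta\<in>Omega. (norm (error beta s t))\<^sup>2)" for t
  define K where "K = rho * L\<^sup>2 * gam\<^sup>2"
  have "gam * eta\<^sup>2 / 2 * (\<Sum>t<Suc m. \<Sum>beta\<in>Omega. (norm (grad_map D psi n gf eta (iterate beta s t)))\<^sup>2)
     \<le> (\<lambda>t. \<Sum>beta\<in>Omega. F (iterate beta s t)) 0 - (\<lambda>t. \<Sum>beta\<in>Omega. F (iterate beta s t)) (Suc m)"
  proof (rule epoch_recursion_bound[where A = A and Q = Q and K = K])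
    show "\<And>t. 0 \<le> A t" "\<And>t. 0 \<le> Q t" "Q 0 = 0"
      unfolding A_def Q_def by (simp_all add: sum_nonneg error_0)
    show "Q (Suc t) \<le> Q t + K * A t" if "t < m" for t
      using error_Suc_sum_bound[OF s that] unfolding Q_def A_def K_def
      by (simp add: sum.distrib sum_distrib_left mult.assoc)
    show "(\<Sum>beta\<in>Omega. F (iterate beta s (Suc t)))
        \<le> (\<Sum>beta\<in>Omega. F (iterate beta s t)) + gam / 2 * Q t - gam * (3 / 2) * A t" for t
    proof -
      have "(\<Sum>beta\<in>Omega. F (iterate beta s (Suc t))) \<le> (\<Sum>beta\<in>Omega. F (iterate beta s t)
          + gam / 2 * (norm (error beta s t))\<^sup>2 - gam * (3 / 2) * (norm (step beta s t))\<^sup>2)"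
        by (intro sum_mono F_iterate_Suc)
      then show ?thesis unfolding Q_def A_def by (simp add: sum.distrib sum_subtractf sum_distrib_left)
    qed
    show "eta\<^sup>2 * (\<Sum>beta\<in>Omega. (norm (grad_map D psi n gf eta (iterate beta s t)))\<^sup>2)
        \<le> 2 * A t + 2 * eta\<^sup>2 * Q t" for t
    proof -
      have "(\<Sum>beta\<in>Omega. eta\<^sup>2 * (norm (grad_map D psi n gf eta (iterate beta s t)))\<^sup>2)
          \<le> (\<Sum>beta\<in>Omega. 2 * (norm (step beta s t))\<^sup>2 + 2 * eta\<^sup>2 * (norm (error beta s t))\<^sup>2)"
        by (intro sum_mono grad_map_iterate)
      then show ?thesis unfolding Q_def A_def by (simp add: sum.distrib sum_distrib_left)
    qed
    show "K \<ge> 0" unfolding K_def using rho_nonneg by simp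
    show "K * real m \<le> 2 / 3" unfolding K_def rho_def using batch_variance by simp
  qed (use gam_pos eta_le in auto)
  moreover have "snapshot beta s = iterate beta s (Suc m)" for beta
    using snapshot_Suc[of beta "s - 1"] s by simp
  ultimately show ?thesis by (simp add: iterate_0)
qed

lemma total_grad_map_bound:
  assumes bdd: "bdd_below (F ` D)"
  shows "(\<Sum>s\<in>{1..S}. \<Sum>t\<in>{0..m}. \<Sum>beta\<in>Omega. (norm (grad_map D psi n gf eta (iterate beta s t)))\<^sup>2)
     \<le> 2 / (gam * eta\<^sup>2) * (real (card Omega) * (F w0 - (INF w\<in>D. F w)))"
proof -
  define H where "H s = (\<Sum>beta\<in>Omega. F (snapshot beta s))" for s
  define G where "G s = (\<Sum>t\<in>{0..m}. \<Sum>beta\<in>Omega. (norm (grad_map D psi n gf eta (iterate beta s t)))\<^sup>2)" for s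
  have "{0..m} = {..<Suc m}" by auto
  then have "gam * eta\<^sup>2 / 2 * (\<Sum>s\<in>{1..S}. G s) \<le> (\<Sum>s\<in>{1..S}. H (s - 1) - H s)"
    using epoch_bound unfolding G_def H_def sum_distrib_left by (intro sum_mono) auto
  also have "\<dots> = (\<Sum>s\<in>Suc ` {..<S}. H (s - 1) - H s)"
    by (simp add: image_Suc_lessThan)
  also have "\<dots> = (\<Sum>s<S. H s - H (Suc s))" by (simp add: sum.reindex)
  also have "\<dots> = H 0 - H S" by (rule sum_lessThan_telescope')
  also have "\<dots> \<le> real (card Omega) * (F w0 - (INF w\<in>D. F w))"
  proof -
    have "(INF w\<in>D. F w) \<le> F (snapshot beta S)" for beta
      using snapshot_in_D bdd by (intro cINF_lower) auto
    then have "(\<Sum>beta\<in>Omega. (INF w\<in>D. F w)) \<le> H S" unfolding H_def by (intro sum_mono) auto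
    moreover have "H 0 = real (card Omega) * F w0" unfolding H_def snapshot_def by simp
    ultimately show ?thesis by (simp add: algebra_simps)
  qed
  finally show ?thesis
    using gam_pos eta_pos unfolding G_def by (simp add: field_simps)
qed

lemma expected_grad_map_bound:
  assumes "bdd_below (F ` D)"
  shows "1 / (real (m + 1) * real S) * (\<Sum>s\<in>{1..S}. \<Sum>t\<in>{0..m}.
           measure_pmf.expectation (pmf_of_set Omega) (\<lambda>beta. (norm (grad_map D psi n gf eta (iterate beta s t)))\<^sup>2))
       \<le> 2 / (gam * eta\<^sup>2 * real (m + 1) * real S) * (F w0 - (INF w\<in>D. F w))"
proof -
  have card: "real (card Omega) > 0" using finite_Omega Omega_nonempty by (simp add: card_gt_0_iff)
  have "(\<Sum>s\<in>{1..S}. \<Sum>t\<in>{0..m}.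
           measure_pmf.expectation (pmf_of_set Omega) (\<lambda>beta. (norm (grad_map D psi n gf eta (iterate beta s t)))\<^sup>2))
      = (\<Sum>s\<in>{1..S}. \<Sum>t\<in>{0..m}. \<Sum>beta\<in>Omega. (norm (grad_map D psi n gf eta (iterate beta s t)))\<^sup>2)
        / real (card Omega)"
    using finite_Omega Omega_nonempty by (simp add: integral_pmf_of_set sum_divide_distrib)
  also have "\<dots> \<le> 2 / (gam * eta\<^sup>2) * (F w0 - (INF w\<in>D. F w))"
    using total_grad_map_bound[OF assms] card by (simp add: pos_divide_le_eq mult_ac)
  finally have "1 / (real (m + 1) * real S) * (\<Sum>s\<in>{1..S}. \<Sum>t\<in>{0..m}.
           measure_pmf.expectation (pmf_of_set Omega) (\<lambda>beta. (norm (grad_map D psi n gf eta (iterate beta s t)))\<^sup>2))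
      \<le> 1 / (real (m + 1) * real S) * (2 / (gam * eta\<^sup>2) * (F w0 - (INF w\<in>D. F w)))"
    by (rule mult_left_mono) simp
  then show ?thesis by (simp add: ac_simps)
qed

end

section \<open>Step sizes and complexity\<close>

lemma batch_size_bounds:
  fixes n b :: nat
  assumes n2: "n \<ge> 2" and b1: "1 \<le> b" and bs: "real b \<le> sqrt (real n)"
  shows "b * b \<le> n" "b < n" "b \<le> n div b" "n < b * (n div b + 1)"
proof -
  have "(real b)\<^sup>2 \<le> (sqrt (real n))\<^sup>2" using bs by (intro power_mono) auto
  then have "real (b * b) \<le> real n" by (simp add: power2_eq_square)
  then show bb: "b * b \<le> n" by linarith
  show "b < n"
  proof (rule ccontr)
    assume "\<not> b < n"
    then have "n * n \<le> b * b" by (simp add: mult_le_mono)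
    moreover have "2 * n \<le> n * n" using n2 by (intro mult_right_mono) auto
    ultimately show False using bb n2 by linarith
  qed
  show "b \<le> n div b" using bb b1 by (simp add: less_eq_div_iff_mult_less_eq)
  have "n = b * (n div b) + n mod b" by simp
  moreover have "n mod b < b" using b1 by simp
  moreover have "b * (n div b + 1) = b * (n div b) + b" by simp
  ultimately show "n < b * (n div b + 1)" by linarith
qed

lemma ps_omega_bounds:
  fixes n b :: nat
  assumes n2: "n \<ge> 2" and b1: "1 \<le> b" and bs: "real b \<le> sqrt (real n)"
  shows "ps_omega n b = 3 / 2 * ((real n - real b) / (real b * (real n - 1)))"
    and "ps_omega n b \<le> 3 / (2 * real b)" and "3 / (4 * real b) \<le> ps_omega n b"
proof -
  have n1: "real n - 1 > 0" using n2 by simp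
  show "ps_omega n b = 3 / 2 * ((real n - real b) / (real b * (real n - 1)))"
    unfolding ps_omega_def by (simp add: field_simps)
  show "ps_omega n b \<le> 3 / (2 * real b)"
    unfolding ps_omega_def using n1 b1 by (simp add: field_simps)
  have "2 * real b \<le> real b * real b + 1"
    using sum_squares_bound[of "real b" 1] by (simp add: power2_eq_square)
  also have "real b * real b \<le> real n"
    using batch_size_bounds(1)[OF assms] by (metis of_nat_le_iff of_nat_mult)
  finally have num: "3 * (real n - 1) \<le> 6 * (real n - real b)" by simp
  have "3 / (4 * real b) = 3 * (real n - 1) / (4 * real b * (real n - 1))"
    using n1 by (intro mult_divide_mult_cancel_right[symmetric]) simp
  also have "\<dots> \<le> 6 * (real n - real b) / (4 * real b * (real n - 1))"
    using num n1 b1 by (intro divide_right_mono) auto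
  also have "\<dots> = ps_omega n b" unfolding ps_omega_def using n1 b1 by (simp add: field_simps)
  finally show "3 / (4 * real b) \<le> ps_omega n b" .
qed

lemma ps_step_sizes:
  fixes n b :: nat and L :: real
  assumes n2: "n \<ge> 2" and b1: "1 \<le> b" and bs: "real b \<le> sqrt (real n)"
  obtains x where "x > 0" "x\<^sup>2 = ps_omega n b * real (n div b)"
    "ps_gamma L n b = 1 / (L * x)" "ps_eta n b = 2 * x / (4 * x + 1)"
proof
  have "0 < 3 / (4 * real b)" using b1 by simp
  then have "ps_omega n b > 0" using ps_omega_bounds(3)[OF assms] by linarith
  moreover have "real (n div b) > 0" using batch_size_bounds(3)[OF assms] b1 by simp
  ultimately show "sqrt (ps_omega n b * real (n div b)) > 0"
    and "(sqrt (ps_omega n b * real (n div b)))\<^sup>2 = ps_omega n b * real (n div b)" by simp_all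
qed (simp_all add: ps_gamma_def ps_eta_def)

lemma ps_parameters_admissible:
  fixes n b :: nat and L :: real
  assumes n2: "n \<ge> 2" and b1: "1 \<le> b" and bs: "real b \<le> sqrt (real n)" and L: "L > 0"
  shows "0 < ps_gamma L n b" and "0 < ps_eta n b" and "(ps_eta n b)\<^sup>2 \<le> 1 / 4"
    and "1 / ps_eta n b - L * ps_gamma L n b / 2 = 2"
    and "(real n - real b) / (real b * (real n - 1)) * L\<^sup>2 * (ps_gamma L n b)\<^sup>2 * real (n div b) = 2 / 3"
proof -
  obtain x where x0: "x > 0" and x2: "x\<^sup>2 = ps_omega n b * real (n div b)"
    and gam: "ps_gamma L n b = 1 / (L * x)" and eta: "ps_eta n b = 2 * x / (4 * x + 1)"
    using ps_step_sizes[OF n2 b1 bs] .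
  show "0 < ps_gamma L n b" unfolding gam using x0 L by simp
  show eta0: "0 < ps_eta n b" unfolding eta using x0 by simp
  have "ps_eta n b \<le> 1 / 2" unfolding eta using x0 by (simp add: field_simps)
  then have "(ps_eta n b)\<^sup>2 \<le> (1 / 2)\<^sup>2" using eta0 by (intro power_mono) auto
  then show "(ps_eta n b)\<^sup>2 \<le> 1 / 4" by (simp add: power2_eq_square)
  show "1 / ps_eta n b - L * ps_gamma L n b / 2 = 2"
    unfolding gam eta using x0 L by (simp add: field_simps)
  have m0: "real (n div b) > 0" using batch_size_bounds(3)[OF n2 b1 bs] b1 by simp
  define rho where "rho = (real n - real b) / (real b * (real n - 1))"
  have rho0: "rho > 0" unfolding rho_def using batch_size_bounds(2)[OF n2 b1 bs] b1 n2 by simp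
  have "L\<^sup>2 * (ps_gamma L n b)\<^sup>2 = 1 / x\<^sup>2" unfolding gam using x0 L by (simp add: field_simps)
  then have "rho * L\<^sup>2 * (ps_gamma L n b)\<^sup>2 * real (n div b)
      = rho * real (n div b) / (ps_omega n b * real (n div b))"
    unfolding x2 by (simp add: mult.assoc)
  also have "\<dots> = rho / ps_omega n b" using m0 by simp
  also have "\<dots> = 2 / 3" unfolding ps_omega_bounds(1)[OF n2 b1 bs] rho_def[symmetric] using rho0 by simp
  finally show "(real n - real b) / (real b * (real n - 1)) * L\<^sup>2 * (ps_gamma L n b)\<^sup>2 * real (n div b) = 2 / 3"
    unfolding rho_def .
qed

lemma rate_constant_inequality:
  fixes x N M :: real
  assumes x0: "x > 0" and N0: "N > 0" and NM: "N \<le> M" and x2: "x\<^sup>2 \<ge> 1 / 4"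
    and xN: "x\<^sup>2 * N\<^sup>2 \<le> 3 / 2 * M\<^sup>2"
  shows "(4 * x + 1)\<^sup>2 * N \<le> 30 * x * M"
proof -
  have M0: "M > 0" using N0 NM by simp
  have "(4 * x * N)\<^sup>2 \<le> (5 * M)\<^sup>2"
  proof -
    have "(4 * x * N)\<^sup>2 = 16 * (x\<^sup>2 * N\<^sup>2)" by (simp add: power_mult_distrib)
    also have "\<dots> \<le> 16 * (3 / 2 * M\<^sup>2)" using xN by linarith
    also have "\<dots> \<le> (5 * M)\<^sup>2" by (simp add: power_mult_distrib)
    finally show ?thesis .
  qed
  then have i: "4 * x * N \<le> 5 * M" by (rule power2_le_imp_le) (use M0 in simp)
  have xh: "x \<ge> 1 / 2"
  proof (rule ccontr)
    assume "\<not> x \<ge> 1 / 2" then have "x < 1 / 2" by simp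
    then have "x\<^sup>2 < (1 / 2)\<^sup>2" using x0 by (simp add: power_strict_mono)
    then show False using x2 by (simp add: power2_eq_square)
  qed
  have t1: "16 * x\<^sup>2 * N \<le> 20 * x * M"
  proof -
    have "16 * x\<^sup>2 * N = 4 * x * (4 * x * N)" by (simp add: power2_eq_square)
    also have "\<dots> \<le> 4 * x * (5 * M)" using i x0 by (intro mult_left_mono) auto
    finally show ?thesis by simp
  qed
  have t2: "8 * x * N \<le> 8 * x * M" using NM x0 by simp
  have t3: "N \<le> 2 * x * M"
  proof -
    have "1 * M \<le> (2 * x) * M" using xh M0 by (intro mult_right_mono) auto
    then show ?thesis using NM by simp
  qed
  have "(4 * x + 1)\<^sup>2 * N = 16 * x\<^sup>2 * N + 8 * x * N + N" by (simp add: power2_eq_square algebra_simps)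
  also have "\<dots> \<le> 20 * x * M + 8 * x * M + 2 * x * M" using t1 t2 t3 by linarith
  finally show ?thesis by (simp add: mult.commute mult.left_commute)
qed

lemma ps_rate_bound:
  fixes n b S :: nat and L \<Delta> :: real
  assumes n2: "n \<ge> 2" and b1: "1 \<le> b" and bs: "real b \<le> sqrt (real n)" and L: "L > 0"
    and S1: "S \<ge> 1" and \<Delta>: "\<Delta> \<ge> 0"
  shows "2 / (ps_gamma L n b * (ps_eta n b)\<^sup>2 * real (n div b + 1) * real S) * \<Delta>
            \<le> 15 * L * \<Delta> / (real S * sqrt (real n))"
proof -
  obtain x where x0: "x > 0" and x2: "x\<^sup>2 = ps_omega n b * real (n div b)"
    and gam: "ps_gamma L n b = 1 / (L * x)" and eta: "ps_eta n b = 2 * x / (4 * x + 1)"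
    using ps_step_sizes[OF n2 b1 bs] .
  define M where "M = real (n div b + 1)"
  define N where "N = sqrt (real n)"
  have N0: "N > 0" unfolding N_def using n2 by simp
  have M0: "M > 0" unfolding M_def by simp
  have NN: "N\<^sup>2 = real n" unfolding N_def by simp
  have b0: "real b > 0" using b1 by simp
  have nbM: "real n < real b * M"
    using batch_size_bounds(4)[OF n2 b1 bs] unfolding M_def by (metis of_nat_less_iff of_nat_mult)
  have NM: "N \<le> M"
  proof -
    have "N * N = real n" using NN by (simp add: power2_eq_square)
    also have "\<dots> < real b * M" by (rule nbM)
    also have "\<dots> \<le> N * M" using bs M0 unfolding N_def by (intro mult_right_mono) auto
    finally have "N * N < N * M" .
    then show ?thesis using N0 by simp
  qed
  have x2_ge: "x\<^sup>2 \<ge> 1 / 4"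
  proof -
    have "0 \<le> 3 / (4 * real b)" by simp
    then have "0 \<le> ps_omega n b" using ps_omega_bounds(3)[OF n2 b1 bs] by linarith
    then have "3 / (4 * real b) * real b \<le> ps_omega n b * real (n div b)"
      using ps_omega_bounds(3)[OF n2 b1 bs] batch_size_bounds(3)[OF n2 b1 bs]
      by (intro mult_mono) auto
    then show ?thesis unfolding x2 using b0 by simp
  qed
  have xN: "x\<^sup>2 * N\<^sup>2 \<le> 3 / 2 * M\<^sup>2"
  proof -
    have "x\<^sup>2 * N\<^sup>2 \<le> 3 / (2 * real b) * real (n div b) * real n"
      unfolding x2 NN using ps_omega_bounds(2)[OF n2 b1 bs] by (intro mult_right_mono) auto
    also have "\<dots> = 3 / 2 * real (n div b) * (real n / real b)" by simp
    also have "\<dots> \<le> 3 / 2 * M * M"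
      using nbM b0 M0 unfolding M_def by (intro mult_mono) (auto simp: field_simps)
    finally show ?thesis by (simp add: power2_eq_square)
  qed
  have core: "(4 * x + 1)\<^sup>2 * N \<le> 30 * x * M"
    by (rule rate_constant_inequality[OF x0 N0 NM x2_ge xN])
  have S0: "real S > 0" using S1 by simp
  have "2 / (ps_gamma L n b * (ps_eta n b)\<^sup>2 * real (n div b + 1) * real S)
      = L * (4 * x + 1)\<^sup>2 / (2 * x * M * real S)"
    unfolding gam eta M_def[symmetric] using x0 L S0 M0
    by (simp add: power_divide power_mult_distrib field_simps power2_eq_square)
  also have "\<dots> \<le> 15 * L / (real S * N)"
    using mult_left_mono[OF core, of L] L x0 M0 S0 N0 by (simp add: field_simps)
  finally have "2 / (ps_gamma L n b * (ps_eta n b)\<^sup>2 * real (n div b + 1) * real S) * \<Delta>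
      \<le> 15 * L / (real S * N) * \<Delta>" using \<Delta> by (rule mult_right_mono)
  then show ?thesis unfolding N_def by simp
qed

lemma epochs_for_accuracy:
  fixes E C L \<Delta> \<epsilon> :: real and S n :: nat
  assumes E: "E \<le> C * L * \<Delta> / (real S * sqrt (real n))"
    and S: "S = nat \<lceil>C * L * \<Delta> / (sqrt (real n) * \<epsilon>\<^sup>2)\<rceil>"
    and S1: "S \<ge> 1" and \<epsilon>: "\<epsilon> > 0" and n: "n > 0"
  shows "E \<le> \<epsilon>\<^sup>2"
proof -
  have "C * L * \<Delta> / (sqrt (real n) * \<epsilon>\<^sup>2) \<le> real S" unfolding S by linarith
  then have "C * L * \<Delta> / sqrt (real n) \<le> real S * \<epsilon>\<^sup>2" using \<epsilon> n by (simp add: field_simps)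
  then have "C * L * \<Delta> / (real S * sqrt (real n)) \<le> \<epsilon>\<^sup>2" using S1 n by (simp add: field_simps)
  then show ?thesis using E by linarith
qed

text \<open>Each epoch evaluates \<open>n\<close> component gradients for the snapshot and \<open>2 b\<close> per inner step.\<close>

lemma gradient_evaluation_bound:
  fixes n b S :: nat and L \<Delta> \<epsilon> :: real
  assumes n2: "n \<ge> 2" and L: "L > 0" and \<Delta>: "\<Delta> \<ge> 0" and \<epsilon>: "\<epsilon> > 0"
    and S: "S = nat \<lceil>15 * L * \<Delta> / (sqrt (real n) * \<epsilon>\<^sup>2)\<rceil>"
  shows "real (S * (n + 2 * b * (n div b))) \<le> 45 * (real n + sqrt (real n) * L * \<Delta> / \<epsilon>\<^sup>2)"
proof -
  define N where "N = sqrt (real n)"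
  have N0: "N > 0" unfolding N_def using n2 by simp
  define y where "y = 15 * L * \<Delta> / (N * \<epsilon>\<^sup>2)"
  have "y \<ge> 0" unfolding y_def using L \<Delta> N0 \<epsilon> by simp
  then have Sy: "real S \<le> y + 1" unfolding S N_def[symmetric] y_def[symmetric] by linarith
  have "b * (n div b) \<le> n" by (simp add: mult.commute)
  then have "real (n + 2 * b * (n div b)) \<le> 3 * real n" by linarith
  then have "real (S * (n + 2 * b * (n div b))) \<le> real S * (3 * real n)"
    by (simp add: mult_left_mono)
  also have "\<dots> \<le> (y + 1) * (3 * real n)" using Sy by (intro mult_right_mono) auto
  also have "\<dots> = 45 * (N * L * \<Delta> / \<epsilon>\<^sup>2) + 3 * real n"
    using N0 \<epsilon> unfolding y_def N_def by (simp add: field_simps power2_eq_square)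
  also have "\<dots> \<le> 45 * (real n + N * L * \<Delta> / \<epsilon>\<^sup>2)" by simp
  finally show ?thesis unfolding N_def .
qed

theorem mainTheorem5:
  fixes f :: "nat \<Rightarrow> 'a::euclidean_space \<Rightarrow> real" and gf :: "nat \<Rightarrow> 'a \<Rightarrow> 'a"
    and psi :: "'a \<Rightarrow> real" and D :: "'a set"
    and n b S :: nat and L :: real and w0 :: 'a
  assumes n2: "n \<ge> 2"
    and grad: "\<forall>i<n. \<forall>x. (f i has_derivative (\<lambda>h. gf i x \<bullet> h)) (at x)"
    and gcont: "\<forall>i<n. continuous_on UNIV (gf i)"
    and dom_ne: "D \<noteq> {}" and dom_cvx: "convex D" and psi_cvx: "convex_on D psi"
    and psi_closed: "closed {(x, t). x \<in> D \<and> psi x \<le> t}"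
    and A1: "bdd_below ((\<lambda>w. (\<Sum>i<n. f i w) / real n + psi w) ` D)"
    and A2: "\<forall>w w'. (\<Sum>i<n. (norm (gf i w - gf i w'))\<^sup>2) / real n \<le> L\<^sup>2 * (norm (w - w'))\<^sup>2"
    and Lpos: "L > 0"
    and b1: "1 \<le> b" and bsqrt: "real b \<le> sqrt (real n)"
    and S1: "S \<ge> 1"
    and gam1: "ps_gamma L n b \<le> 1"
  shows
   "measure_pmf.expectation
       (pair_pmf (pmf_of_set (batch_space n b S (n div b))) (pmf_of_set ({1..S} \<times> {0..n div b})))
       (\<lambda>(beta, (s, t)). (norm (grad_map D psi n gf (ps_eta n b)
            (sarah_iter D psi n gf b (\<lambda>_. ps_eta n b) (\<lambda>_. ps_gamma L n b) (n div b) beta w0 s t)))\<^sup>2)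
    = (1 / (real (n div b + 1) * real S)) *
      (\<Sum>s\<in>{1..S}. \<Sum>t\<in>{0..n div b}. measure_pmf.expectation (pmf_of_set (batch_space n b S (n div b)))
         (\<lambda>beta. (norm (grad_map D psi n gf (ps_eta n b)
            (sarah_iter D psi n gf b (\<lambda>_. ps_eta n b) (\<lambda>_. ps_gamma L n b) (n div b) beta w0 s t)))\<^sup>2))
   \<and> (w0 \<in> D \<longrightarrow>
      (1 / (real (n div b + 1) * real S)) *
      (\<Sum>s\<in>{1..S}. \<Sum>t\<in>{0..n div b}. measure_pmf.expectation (pmf_of_set (batch_space n b S (n div b)))
         (\<lambda>beta. (norm (grad_map D psi n gf (ps_eta n b)
            (sarah_iter D psi n gf b (\<lambda>_. ps_eta n b) (\<lambda>_. ps_gamma L n b) (n div b) beta w0 s t)))\<^sup>2))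
      \<le> 2 / (ps_gamma L n b * (ps_eta n b)\<^sup>2 * real (n div b + 1) * real S) *
         (((\<Sum>i<n. f i w0) / real n + psi w0) - (INF w\<in>D. (\<Sum>i<n. f i w) / real n + psi w)))
   \<and> (\<exists>C::real. C > 0 \<and>
       (\<forall>(n'::nat) (b'::nat) (L'::real) (S'::nat) (\<Delta>::real).
          n' \<ge> 2 \<and> 1 \<le> b' \<and> real b' \<le> sqrt (real n') \<and> L' > 0 \<and> S' \<ge> 1 \<and>
          ps_gamma L' n' b' \<le> 1 \<and> \<Delta> \<ge> 0 \<longrightarrow>
          2 / (ps_gamma L' n' b' * (ps_eta n' b')\<^sup>2 * real (n' div b' + 1) * real S') * \<Delta>
            \<le> C * L' * \<Delta> / (real S' * sqrt (real n')))
     \<and> (w0 \<in> D \<longrightarrow> (\<forall>\<epsilon>::real. \<epsilon> > 0 \<longrightarrow>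
          S = nat \<lceil>C * L * (((\<Sum>i<n. f i w0) / real n + psi w0) - (INF w\<in>D. (\<Sum>i<n. f i w) / real n + psi w))
                     / (sqrt (real n) * \<epsilon>\<^sup>2)\<rceil> \<longrightarrow>
          measure_pmf.expectation
            (pair_pmf (pmf_of_set (batch_space n b S (n div b))) (pmf_of_set ({1..S} \<times> {0..n div b})))
            (\<lambda>(beta, (s, t)). (norm (grad_map D psi n gf (ps_eta n b)
               (sarah_iter D psi n gf b (\<lambda>_. ps_eta n b) (\<lambda>_. ps_gamma L n b) (n div b) beta w0 s t)))\<^sup>2)
          \<le> \<epsilon>\<^sup>2))
     \<and> (\<exists>C'::real. C' > 0 \<and>
         (\<forall>(n'::nat) (b'::nat) (L'::real) (\<Delta>::real) (\<epsilon>::real) (S'::nat).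
            n' \<ge> 2 \<and> 1 \<le> b' \<and> real b' \<le> sqrt (real n') \<and> L' > 0 \<and>
            ps_gamma L' n' b' \<le> 1 \<and> \<Delta> \<ge> 0 \<and> \<epsilon> > 0 \<and>
            S' = nat \<lceil>C * L' * \<Delta> / (sqrt (real n') * \<epsilon>\<^sup>2)\<rceil> \<longrightarrow>
            real (S' * (n' + 2 * b' * (n' div b'))) \<le> C' * (real n' + sqrt (real n') * L' * \<Delta> / \<epsilon>\<^sup>2))))"
proof -
  define G where "G beta s t = (norm (grad_map D psi n gf (ps_eta n b)
    (sarah_iter D psi n gf b (\<lambda>_. ps_eta n b) (\<lambda>_. ps_gamma L n b) (n div b) beta w0 s t)))\<^sup>2" for beta s t
  define E where "E s t = measure_pmf.expectation (pmf_of_set (batch_space n b S (n div b))) (\<lambda>beta. G beta s t)"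
    for s t
  define E_uniform where "E_uniform = measure_pmf.expectation
    (pair_pmf (pmf_of_set (batch_space n b S (n div b))) (pmf_of_set ({1..S} \<times> {0..n div b})))
    (\<lambda>(beta, (s, t)). G beta s t)"
  define \<Delta> where "\<Delta> = ((\<Sum>i<n. f i w0) / real n + psi w0) - (INF w\<in>D. (\<Sum>i<n. f i w) / real n + psi w)"
  have bn: "b \<le> n" using batch_size_bounds(2)[OF n2 b1 bsqrt] by simp
  have average: "E_uniform = 1 / (real (n div b + 1) * real S) * (\<Sum>s\<in>{1..S}. \<Sum>t\<in>{0..n div b}. E s t)"
    unfolding E_uniform_def E_def using finite_batch_space batch_space_nonempty[OF bn] S1
    by (rule expectation_uniform_epoch_index)
  have descent: "1 / (real (n div b + 1) * real S) * (\<Sum>s\<in>{1..S}. \<Sum>t\<in>{0..n div b}. E s t)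
      \<le> 2 / (ps_gamma L n b * (ps_eta n b)\<^sup>2 * real (n div b + 1) * real S) * \<Delta>" if w0D: "w0 \<in> D"
  proof -
    note ps = ps_parameters_admissible[OF n2 b1 bsqrt Lpos]
    interpret prox_sarah f gf psi D n b S "n div b" L "ps_gamma L n b" "ps_eta n b" w0
      by unfold_locales (use n2 grad dom_ne psi_cvx psi_closed A2 Lpos b1 bn gam1 ps w0D in auto)
    show ?thesis
      using expected_grad_map_bound A1
      unfolding E_def G_def \<Delta>_def sarah_iter_eq_iterate Omega_def F_def[abs_def] fbar_def by simp
  qed
  have accuracy: "E_uniform \<le> \<epsilon>\<^sup>2"
    if w0D: "w0 \<in> D" and \<epsilon>: "\<epsilon> > 0" and S: "S = nat \<lceil>15 * L * \<Delta> / (sqrt (real n) * \<epsilon>\<^sup>2)\<rceil>" for \<epsilon>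
  proof (rule epochs_for_accuracy[OF _ S S1 \<epsilon>])
    have \<Delta>0: "\<Delta> \<ge> 0" unfolding \<Delta>_def using cINF_lower[OF A1 w0D] by simp
    show "E_uniform \<le> 15 * L * \<Delta> / (real S * sqrt (real n))"
      unfolding average using descent[OF w0D] ps_rate_bound[OF n2 b1 bsqrt Lpos S1 \<Delta>0] by (rule order_trans)
  qed (use n2 in simp)
  show ?thesis
    unfolding G_def[symmetric] E_def[symmetric] E_uniform_def[symmetric] \<Delta>_def[symmetric]
    apply (rule conjI, rule average)
    apply (rule conjI, blast intro: descent)
    apply (rule exI[of _ "15::real"], intro conjI)
    subgoal by simp
    subgoal using ps_rate_bound by blast
    subgoal using accuracy by blast
    subgoal using gradient_evaluation_bound by (intro exI[of _ "45::real"] conjI) (simp, blast)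
    done
qed

end
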